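(* Let $G$, $D$, $F$, $E$, $\Lambda$ be as in the context. Let $M\subseteq\Lambda$ be a left ideal that is right generic with respect to $D$. Let $Y$ be a left $\Lambda$-module and $Z\subseteq Y$ a left $E[D]$-submodule such that $Y$ and $Z$ admit compatible rational structures (a left $\Lambda_F$-module $Y_F$ and an $F[D]$-submodule $Z_F\subseteq Y_F$ with $Y=Y_F\otimes_FE$, $Z=Z_F\otimes_FE$ compatibly with $Z\subseteq Y$), and suppose $Y$ admits an injective $\Lambda$-module homomorphism $Y\to\Lambda$. Then for every left ideal $N\subseteq\Lambda$ isomorphic to $M$ as a left $\Lambda$-module, $\dim\mathrm{Hom}_G(\Lambda/M,Y;Z)\le\dim\mathrm{Hom}_G(\Lambda/N,Y;Z)$.
   Context: $G$ is a finite group, $D\subseteq G$ a subgroup, $F$ a field of characteristic zero over which all irreducible representations of $G$ are defined, $E\supseteq F$, $\Lambda_F=F[G]$, $\Lambda=E[G]=\Lambda_F\otimes_FE$. A right rational $D$-subspace of $\Lambda$ is $V=V_F\otimes_FE$ with $V_F$ a right $F[D]$-submodule of $\Lambda_F$. A left ideal $M$ is right generic with respect to $D$ if $\dim(M\cap V)\le\dim(N\cap V)$ for all right rational $D$-subspaces $V$ and all left ideals $N\cong M$ as left $\Lambda$-modules. For a left ideal $M$, $\mathrm{Hom}_G(\Lambda/M,Y;Z)$ denotes the set of $G$-equivariant homomorphisms $\phi:\Lambda/M\to Y$ with $\phi([1]\bmod M)\in Z$. *)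

theory Defs
  imports Complex_Main "HOL-Algebra.Group" "HOL-Library.Function_Algebras"
begin

(* Elements of a group algebra K[G] (K a subset of the coefficient field 'e,
   e.g. a subfield F or UNIV = E) are functions 'g => 'e supported on the
   carrier of G with values in K.  Addition is pointwise (Function_Algebras);
   the algebra product is convolution (NOT the pointwise product). *)
definition grp_alg :: "('g, 'b) monoid_scheme \<Rightarrow> 'e::field set \<Rightarrow> ('g \<Rightarrow> 'e) set" where
  "grp_alg G K = {a. (\<forall>x. x \<notin> carrier G \<longrightarrow> a x = 0) \<and> (\<forall>x. a x \<in> K)}"

definition sub_alg :: "'g set \<Rightarrow> 'e::field set \<Rightarrow> ('g \<Rightarrow> 'e) set" where
  "sub_alg D K = {a. (\<forall>x. x \<notin> D \<longrightarrow> a x = 0) \<and> (\<forall>x. a x \<in> K)}"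

definition conv :: "('g, 'b) monoid_scheme \<Rightarrow> ('g \<Rightarrow> 'e::field) \<Rightarrow> ('g \<Rightarrow> 'e) \<Rightarrow> 'g \<Rightarrow> 'e" where
  "conv G a b = (\<lambda>x. if x \<in> carrier G
      then (\<Sum>g\<in>carrier G. a g * b (inv\<^bsub>G\<^esub> g \<otimes>\<^bsub>G\<^esub> x)) else 0)"

definition delta :: "'g \<Rightarrow> 'g \<Rightarrow> 'e::field" where
  "delta g = (\<lambda>x. if x = g then 1 else 0)"

definition ascale :: "'e::field \<Rightarrow> ('g \<Rightarrow> 'e) \<Rightarrow> 'g \<Rightarrow> 'e" where
  "ascale c a = (\<lambda>x. c * a x)"

definition is_subfield :: "'e::field set \<Rightarrow> bool" where
  "is_subfield K \<longleftrightarrow> 0 \<in> K \<and> 1 \<in> K \<and> (\<forall>x\<in>K. \<forall>y\<in>K. x + y \<in> K \<and> x * y \<in> K \<and> - x \<in> K)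
      \<and> (\<forall>x\<in>K. x \<noteq> 0 \<longrightarrow> inverse x \<in> K)"

definition K_subspace :: "'e set \<Rightarrow> ('e \<Rightarrow> 'v \<Rightarrow> 'v) \<Rightarrow> 'v::ab_group_add set \<Rightarrow> bool" where
  "K_subspace K sc S \<longleftrightarrow> 0 \<in> S \<and> (\<forall>x\<in>S. \<forall>y\<in>S. x + y \<in> S) \<and> (\<forall>c\<in>K. \<forall>x\<in>S. sc c x \<in> S)"

definition K_indep :: "'e::field set \<Rightarrow> ('e \<Rightarrow> 'v \<Rightarrow> 'v) \<Rightarrow> 'v::ab_group_add set \<Rightarrow> bool" where
  "K_indep K sc S \<longleftrightarrow> (\<forall>T c. finite T \<longrightarrow> T \<subseteq> S \<longrightarrow> (\<forall>t\<in>T. c t \<in> K) \<longrightarrow>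
      (\<Sum>t\<in>T. sc (c t) t) = 0 \<longrightarrow> (\<forall>t\<in>T. c t = 0))"

definition E_span :: "('e::field \<Rightarrow> 'v \<Rightarrow> 'v) \<Rightarrow> 'v::ab_group_add set \<Rightarrow> 'v set" where
  "E_span sc S = {v. \<exists>T c. finite T \<and> T \<subseteq> S \<and> v = (\<Sum>t\<in>T. sc (c t) t)}"

(* S_F is an F-form (rational structure) of S: S = S_F \<otimes>_F E via the natural map *)
definition rational_form :: "'e::field set \<Rightarrow> ('e \<Rightarrow> 'v \<Rightarrow> 'v) \<Rightarrow> 'v::ab_group_add set \<Rightarrow> 'v set \<Rightarrow> bool" where
  "rational_form F sc SF S \<longleftrightarrow> K_subspace F sc SF \<and> SF \<subseteq> S \<and> E_span sc SF = S
      \<and> (\<forall>T\<subseteq>SF. K_indep F sc T \<longrightarrow> K_indep UNIV sc T)"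

definition left_ideal :: "('g, 'b) monoid_scheme \<Rightarrow> 'e::field set \<Rightarrow> ('g \<Rightarrow> 'e) set \<Rightarrow> bool" where
  "left_ideal G K M \<longleftrightarrow> M \<subseteq> grp_alg G K \<and> K_subspace K ascale M
      \<and> (\<forall>a\<in>grp_alg G K. \<forall>m\<in>M. conv G a m \<in> M)"

definition ideal_iso :: "('g, 'b) monoid_scheme \<Rightarrow> ('g \<Rightarrow> 'e::field) set \<Rightarrow> ('g \<Rightarrow> 'e) set \<Rightarrow> bool" where
  "ideal_iso G M N \<longleftrightarrow> (\<exists>f. bij_betw f M N \<and> (\<forall>x\<in>M. \<forall>y\<in>M. f (x + y) = f x + f y)
      \<and> (\<forall>a\<in>grp_alg G UNIV. \<forall>x\<in>M. f (conv G a x) = conv G a (f x)))"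

definition right_rational_sub :: "('g, 'b) monoid_scheme \<Rightarrow> 'g set \<Rightarrow> 'e::field set \<Rightarrow> ('g \<Rightarrow> 'e) set \<Rightarrow> bool" where
  "right_rational_sub G D F V \<longleftrightarrow> (\<exists>VF. VF \<subseteq> grp_alg G F \<and> K_subspace F ascale VF
      \<and> (\<forall>v\<in>VF. \<forall>b\<in>sub_alg D F. conv G v b \<in> VF) \<and> V = E_span ascale VF)"

abbreviation Edim :: "('g \<Rightarrow> 'e::field) set \<Rightarrow> nat" where
  "Edim S \<equiv> vector_space.dim ascale S"

definition right_generic :: "('g, 'b) monoid_scheme \<Rightarrow> 'g set \<Rightarrow> 'e::field set \<Rightarrow> ('g \<Rightarrow> 'e) set \<Rightarrow> bool" where
  "right_generic G D F M \<longleftrightarrow> (\<forall>V N. right_rational_sub G D F V \<longrightarrow> left_ideal G UNIV N \<longrightarrow>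
      ideal_iso G M N \<longrightarrow> Edim (M \<inter> V) \<le> Edim (N \<inter> V))"

(* F is a splitting field for G: every simple F[G]-module (up to isomorphism,
   a minimal left ideal of F[G]) is absolutely simple, i.e. its
   F[G]-endomorphisms are the scalars from F. *)
definition minimal_left_ideal :: "('g, 'b) monoid_scheme \<Rightarrow> 'e::field set \<Rightarrow> ('g \<Rightarrow> 'e) set \<Rightarrow> bool" where
  "minimal_left_ideal G F L \<longleftrightarrow> left_ideal G F L \<and> L \<noteq> {0}
      \<and> (\<forall>L'. left_ideal G F L' \<longrightarrow> L' \<subseteq> L \<longrightarrow> L' = {0} \<or> L' = L)"

definition splitting_field :: "('g, 'b) monoid_scheme \<Rightarrow> 'e::field set \<Rightarrow> bool" where
  "splitting_field G F \<longleftrightarrow> (\<forall>L f. minimal_left_ideal G F L \<longrightarrow>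
      (\<forall>x\<in>L. f x \<in> L) \<longrightarrow> (\<forall>x\<in>L. \<forall>y\<in>L. f (x + y) = f x + f y) \<longrightarrow>
      (\<forall>a\<in>grp_alg G F. \<forall>x\<in>L. f (conv G a x) = conv G a (f x)) \<longrightarrow>
      (\<exists>c\<in>F. \<forall>x\<in>L. f x = ascale c x))"

(* Left E[G]-module structure on a subset Y of a type 'y carrying an E-vector
   space structure sc; the action of E[G] is lm.  E acts compatibly via E\<cdot>1. *)
definition left_module :: "('g, 'b) monoid_scheme \<Rightarrow> 'e::field set \<Rightarrow> ('e \<Rightarrow> 'y \<Rightarrow> 'y)
    \<Rightarrow> (('g \<Rightarrow> 'e) \<Rightarrow> 'y \<Rightarrow> 'y) \<Rightarrow> 'y::ab_group_add set \<Rightarrow> bool" where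
  "left_module G K sc lm Y \<longleftrightarrow> K_subspace K sc Y
      \<and> (\<forall>a\<in>grp_alg G K. \<forall>y\<in>Y. lm a y \<in> Y)
      \<and> (\<forall>a\<in>grp_alg G K. \<forall>y\<in>Y. \<forall>z\<in>Y. lm a (y + z) = lm a y + lm a z)
      \<and> (\<forall>a\<in>grp_alg G K. \<forall>b\<in>grp_alg G K. \<forall>y\<in>Y. lm (a + b) y = lm a y + lm b y)
      \<and> (\<forall>a\<in>grp_alg G K. \<forall>b\<in>grp_alg G K. \<forall>y\<in>Y. lm (conv G a b) y = lm a (lm b y))
      \<and> (\<forall>c\<in>K. \<forall>y\<in>Y. lm (ascale c (delta \<one>\<^bsub>G\<^esub>)) y = sc c y)"

definition D_submodule :: "'g set \<Rightarrow> 'e::field set \<Rightarrow> ('e \<Rightarrow> 'y \<Rightarrow> 'y)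
    \<Rightarrow> (('g \<Rightarrow> 'e) \<Rightarrow> 'y \<Rightarrow> 'y) \<Rightarrow> 'y::ab_group_add set \<Rightarrow> bool" where
  "D_submodule D K sc lm Z \<longleftrightarrow> K_subspace K sc Z \<and> (\<forall>a\<in>sub_alg D K. \<forall>z\<in>Z. lm a z \<in> Z)"

(* Hom_G(\<Lambda>/M, Y; Z): G-equivariant (= E[G]-linear) maps \<Lambda>/M \<rightarrow> Y sending [1] into Z.
   A map \<Lambda>/M \<rightarrow> Y is represented by its composite with \<Lambda> \<rightarrow> \<Lambda>/M, i.e. an
   E[G]-linear map \<Lambda> \<rightarrow> Y vanishing on M (extended by 0 outside \<Lambda>). *)
definition HomG :: "('g, 'b) monoid_scheme \<Rightarrow> ('g \<Rightarrow> 'e::field) set \<Rightarrow> (('g \<Rightarrow> 'e) \<Rightarrow> 'y \<Rightarrow> 'y)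
    \<Rightarrow> 'y::ab_group_add set \<Rightarrow> 'y set \<Rightarrow> (('g \<Rightarrow> 'e) \<Rightarrow> 'y) set" where
  "HomG G M lm Y Z = {\<phi>. (\<forall>x. x \<notin> grp_alg G UNIV \<longrightarrow> \<phi> x = 0)
      \<and> (\<forall>x\<in>grp_alg G UNIV. \<phi> x \<in> Y)
      \<and> (\<forall>x\<in>grp_alg G UNIV. \<forall>y\<in>grp_alg G UNIV. \<phi> (x + y) = \<phi> x + \<phi> y)
      \<and> (\<forall>a\<in>grp_alg G UNIV. \<forall>x\<in>grp_alg G UNIV. \<phi> (conv G a x) = lm a (\<phi> x))
      \<and> (\<forall>m\<in>M. \<phi> m = 0)
      \<and> \<phi> (delta \<one>\<^bsub>G\<^esub>) \<in> Z}"

abbreviation Hdim :: "('e::field \<Rightarrow> 'y \<Rightarrow> 'y) \<Rightarrow> (('g \<Rightarrow> 'e) \<Rightarrow> 'y::ab_group_add) set \<Rightarrow> nat" where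
  "Hdim sc H \<equiv> vector_space.dim (\<lambda>c \<phi>. (\<lambda>x. sc c (\<phi> x))) H"

end

theory Submission
  imports Defs
begin

(* Let h : Y -> Lambda be an equivariant embedding, A = h(Z), and V the annihilator of A for the
   trace pairing <a, b> = (a b)(1) on Lambda = E[G].  Evaluation at [1] identifies
   Hom_G(Lambda/M, Y; Z) with the elements of Z killed by M, which h maps onto the elements of A
   orthogonal to M; the rank identity for the pairing between M and A then yields
       dim Hom_G(Lambda/M, Y; Z) + dim M = dim A + dim (M \<inter> V),
   and likewise for N, where dim M = dim N as M and N are isomorphic.  If h is rational
   (h(Y_F) \<subseteq> F[G]), V is spanned by its F-rational part, which is a right F[D]-module since Z_F
   is an F[D]-module; so V is a right rational D-subspace and genericity of M gives
   dim (M \<inter> V) \<le> dim (N \<inter> V).  A rational embedding exists because F is infinite: equivariant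
   maps Y -> Lambda are lifts of linear functionals on Y, and the coefficients of the given one are
   made rational one basis vector at a time, avoiding the finitely many singular values of a pencil. *)

definition linear_on :: "('k \<Rightarrow> 'v \<Rightarrow> 'v) \<Rightarrow> ('k \<Rightarrow> 'w \<Rightarrow> 'w) \<Rightarrow> 'v::ab_group_add set
    \<Rightarrow> ('v \<Rightarrow> 'w::ab_group_add) \<Rightarrow> bool" where
  "linear_on s1 s2 S f \<longleftrightarrow>
     (\<forall>x\<in>S. \<forall>y\<in>S. f (x + y) = f x + f y) \<and> (\<forall>c. \<forall>x\<in>S. f (s1 c x) = s2 c (f x))"

lemma linear_on_add: "linear_on s1 s2 S f \<Longrightarrow> x \<in> S \<Longrightarrow> y \<in> S \<Longrightarrow> f (x + y) = f x + f y"
  by (simp add: linear_on_def)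

lemma linear_on_scale: "linear_on s1 s2 S f \<Longrightarrow> x \<in> S \<Longrightarrow> f (s1 c x) = s2 c (f x)"
  by (simp add: linear_on_def)

lemma linear_on_subset: "linear_on s1 s2 S f \<Longrightarrow> T \<subseteq> S \<Longrightarrow> linear_on s1 s2 T f"
  unfolding linear_on_def by blast

context vector_space_pair
begin

lemma linear_on_0:
  assumes f: "linear_on s1 s2 S f" and S: "vs1.subspace S"
  shows "f 0 = 0"
  using linear_on_add[OF f vs1.subspace_0[OF S] vs1.subspace_0[OF S]] by simp

lemma linear_on_diff:
  assumes f: "linear_on s1 s2 S f" and S: "vs1.subspace S" and "x \<in> S" "y \<in> S"
  shows "f (x - y) = f x - f y"
  using linear_on_add[OF f vs1.subspace_diff[OF S assms(3,4)] assms(4)] by simp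

lemma linear_on_sum:
  assumes f: "linear_on s1 s2 S f" and S: "vs1.subspace S" and v: "\<And>i. i \<in> I \<Longrightarrow> v i \<in> S"
  shows "f (\<Sum>i\<in>I. s1 (a i) (v i)) = (\<Sum>i\<in>I. s2 (a i) (f (v i)))"
  using v
proof (induction I rule: infinite_finite_induct)
  case (insert x I)
  have "(\<Sum>i\<in>I. s1 (a i) (v i)) \<in> S"
    using insert.prems by (intro vs1.subspace_sum[OF S] vs1.subspace_scale[OF S]) auto
  with insert show ?case
    by (simp add: linear_on_add[OF f] linear_on_scale[OF f] vs1.subspace_scale[OF S])
qed (use linear_on_0[OF f S] in auto)

lemma linear_on_span_image:
  assumes f: "linear_on s1 s2 S f" and S: "vs1.subspace S"
    and B: "B \<subseteq> S" and x: "x \<in> vs1.span B"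
  shows "f x \<in> vs2.span (f ` B)"
proof -
  obtain t r where t: "finite t" "t \<subseteq> B" "x = (\<Sum>a\<in>t. s1 (r a) a)"
    using x unfolding vs1.span_explicit by blast
  have "f x = (\<Sum>a\<in>t. s2 (r a) (f a))"
    using t B linear_on_sum[OF f S, of t id r] by auto
  also have "\<dots> \<in> vs2.span (f ` B)"
    using t by (intro vs2.span_sum vs2.span_scale vs2.span_base) auto
  finally show ?thesis .
qed

lemma linear_on_inj_independent:
  assumes f: "linear_on s1 s2 S f" and S: "vs1.subspace S" and inj: "inj_on f S"
    and B: "B \<subseteq> S" "vs1.independent B"
  shows "vs2.independent (f ` B)"
proof
  assume "vs2.dependent (f ` B)"
  then obtain t u where t: "finite t" "t \<subseteq> f ` B" "(\<Sum>v\<in>t. s2 (u v) v) = 0" "\<exists>v\<in>t. u v \<noteq> 0"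
    unfolding vs2.dependent_explicit by blast
  obtain t' where t': "t' \<subseteq> B" "t = f ` t'" "inj_on f t'"
    using subset_image_inj[THEN iffD1, OF t(2)] by blast
  have "finite t'" using t(1) t' finite_image_iff by blast
  have t'S: "t' \<subseteq> S" using t' B by auto
  have "f (\<Sum>v\<in>t'. s1 (u (f v)) v) = (\<Sum>v\<in>t'. s2 (u (f v)) (f v))"
    using linear_on_sum[OF f S, of t' id "\<lambda>v. u (f v)"] t'S by auto
  also have "\<dots> = 0" using t(3) t' by (simp add: sum.reindex)
  finally have "f (\<Sum>v\<in>t'. s1 (u (f v)) v) = f 0" using linear_on_0[OF f S] by simp
  then have "(\<Sum>v\<in>t'. s1 (u (f v)) v) = 0"
    by (rule inj_onD[OF inj]) (use t'S in \<open>auto intro: vs1.subspace_sum[OF S]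
        vs1.subspace_scale[OF S] vs1.subspace_0[OF S]\<close>)
  then have "\<forall>v\<in>t'. u (f v) = 0"
    using vs1.independentD[OF B(2) \<open>finite t'\<close> t'(1), of "\<lambda>v. u (f v)"] by blast
  then show False using t(4) t'(2) by auto
qed

lemma linear_on_inj_dim:
  assumes f: "linear_on s1 s2 S f" and S: "vs1.subspace S" and inj: "inj_on f S"
  shows "vs2.dim (f ` S) = vs1.dim S"
proof -
  obtain B where B: "B \<subseteq> S" "vs1.independent B" "S \<subseteq> vs1.span B" "card B = vs1.dim S"
    by (rule vs1.basis_exists)
  have "f ` S \<subseteq> vs2.span (f ` B)"
    using linear_on_span_image[OF f S B(1)] B(3) by blast
  then have "card (f ` B) = vs2.dim (f ` S)"
    using B(1) linear_on_inj_independent[OF f S inj B(1,2)] by (intro vs2.basis_card_eq_dim) auto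
  moreover have "card (f ` B) = card B" using card_image[OF inj_on_subset[OF inj B(1)]] .
  ultimately show ?thesis using B(4) by simp
qed

lemma linear_on_subspace_image:
  assumes f: "linear_on s1 s2 S f" and S: "vs1.subspace S" and T: "vs1.subspace T" "T \<subseteq> S"
  shows "vs2.subspace (f ` T)"
  unfolding vs2.subspace_def
proof (intro conjI ballI allI)
  show "0 \<in> f ` T" using linear_on_0[OF f S] vs1.subspace_0[OF T(1)] by (metis image_eqI)
  show "x + y \<in> f ` T" if xy: "x \<in> f ` T" "y \<in> f ` T" for x y
  proof -
    obtain x' y' where "x' \<in> T" "y' \<in> T" "x = f x'" "y = f y'" using xy by blast
    then show ?thesis using T linear_on_add[OF f, of x' y'] vs1.subspace_add[OF T(1)]
      by (metis image_eqI subsetD)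
  qed
  show "c *b x \<in> f ` T" if x: "x \<in> f ` T" for c x
  proof -
    obtain x' where "x' \<in> T" "x = f x'" using x by blast
    then show ?thesis using T linear_on_scale[OF f, of x' c] vs1.subspace_scale[OF T(1)]
      by (metis image_eqI subsetD)
  qed
qed

lemma linear_on_eq_on_span:
  assumes f: "linear_on s1 s2 S f" and g: "linear_on s1 s2 S g" and S: "vs1.subspace S"
    and B: "B \<subseteq> S" "\<And>b. b \<in> B \<Longrightarrow> f b = g b" and x: "x \<in> vs1.span B"
  shows "f x = g x"
proof -
  obtain t r where t: "finite t" "t \<subseteq> B" "x = (\<Sum>a\<in>t. s1 (r a) a)"
    using x unfolding vs1.span_explicit by blast
  have tS: "id a \<in> S" if "a \<in> t" for a using that t(2) B(1) by auto
  have "f x = (\<Sum>a\<in>t. r a *b f a)" using linear_on_sum[OF f S, of t id r] tS t(3) by simp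
  also have "\<dots> = (\<Sum>a\<in>t. r a *b g a)" using t B by (intro sum.cong) auto
  also have "\<dots> = g x" using linear_on_sum[OF g S, of t id r] tS t(3) by simp
  finally show ?thesis .
qed

lemma pencil_eigenvectors_independent:
  assumes C: "linear_on s1 s2 S C" "inj_on C S" and Q: "linear_on s1 s2 S Q" and S: "vs1.subspace S"
    and T: "finite T" "T \<subseteq> S" "0 \<notin> T" "inj_on \<mu> T" "\<And>v. v \<in> T \<Longrightarrow> Q v = \<mu> v *b C v"
  shows "vs1.independent T"
  using T
proof (induction T rule: finite_induct)
  case (insert k T)
  have kS: "k \<in> S" and TS: "T \<subseteq> S" and k0: "k \<noteq> 0" using insert.prems by auto
  have mu_ne: "\<mu> v \<noteq> \<mu> k" if "v \<in> T" for v
    using insert.prems(3) that insert.hyps(2) by (auto simp: inj_on_def)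
  have indT: "vs1.independent T"
    using insert.IH insert.prems by simp
  show ?case
  proof (rule vs1.independent_if_scalars_zero)
    show "finite (insert k T)" using insert.hyps by simp
    fix u v assume sz: "(\<Sum>v\<in>insert k T. u v *a v) = 0" and v: "v \<in> insert k T"
    text \<open>Apply \<open>C\<close> and \<open>Q\<close> to the relation, then eliminate \<open>k\<close>.\<close>
    have image: "u k *b L k + (\<Sum>v\<in>T. u v *b L v) = 0" if L: "linear_on s1 s2 S L" for L
    proof -
      have "L (\<Sum>v\<in>insert k T. u v *a id v) = (\<Sum>v\<in>insert k T. u v *b L (id v))"
        by (rule linear_on_sum[OF L S]) (use insert.prems(1) in auto)
      then have "(\<Sum>v\<in>insert k T. u v *b L v) = L 0" using sz by simp
      then show ?thesis using linear_on_0[OF L S] insert.hyps by simp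
    qed
    have "(u v * (\<mu> v - \<mu> k)) *b C v = u v *b Q v - \<mu> k *b (u v *b C v)" if "v \<in> T" for v
    proof -
      have "u v *b Q v = (u v * \<mu> v) *b C v" using insert.prems(4) that by simp
      moreover have "\<mu> k *b (u v *b C v) = (u v * \<mu> k) *b C v" by (simp add: mult.commute)
      ultimately show ?thesis by (simp add: right_diff_distrib vs2.scale_left_diff_distrib)
    qed
    then have "(\<Sum>v\<in>T. (u v * (\<mu> v - \<mu> k)) *b C v)
        = (\<Sum>v\<in>T. u v *b Q v) - \<mu> k *b (\<Sum>v\<in>T. u v *b C v)"
      by (simp add: sum_subtractf vs2.scale_sum_right)
    also have "\<dots> = - (u k *b Q k) + \<mu> k *b (u k *b C k)"
      using image[OF Q] image[OF C(1)] by (simp add: eq_neg_iff_add_eq_0[symmetric])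
    also have "\<dots> = 0" using insert.prems(4)[of k] by (simp add: mult.commute)
    finally have "(\<Sum>v\<in>T. (u v * (\<mu> v - \<mu> k)) *b C v) = 0" .
    moreover have "C (\<Sum>v\<in>T. (u v * (\<mu> v - \<mu> k)) *a id v)
        = (\<Sum>v\<in>T. (u v * (\<mu> v - \<mu> k)) *b C (id v))"
      by (rule linear_on_sum[OF C(1) S]) (use TS in auto)
    ultimately have "C (\<Sum>v\<in>T. (u v * (\<mu> v - \<mu> k)) *a v) = C 0"
      using linear_on_0[OF C(1) S] by simp
    then have "(\<Sum>v\<in>T. (u v * (\<mu> v - \<mu> k)) *a v) = 0"
      using TS by (intro inj_onD[OF C(2)] vs1.subspace_sum[OF S] vs1.subspace_scale[OF S]
          vs1.subspace_0[OF S]) auto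
    then have "u v * (\<mu> v - \<mu> k) = 0" if "v \<in> T" for v
      using vs1.independentD[OF indT insert.hyps(1) subset_refl, of "\<lambda>v. u v * (\<mu> v - \<mu> k)"] that
      by blast
    then have uT: "u v = 0" if "v \<in> T" for v using mu_ne that by simp
    then have "u k *a k = 0" using sz insert.hyps by simp
    then show "u v = 0" using k0 uT v by auto
  qed
qed (rule vs1.independent_empty)

lemma linear_on_kernel:
  assumes f: "linear_on s1 s2 S f" and S: "vs1.subspace S" and "\<not> inj_on f S"
  shows "\<exists>y. y \<in> S \<and> y \<noteq> 0 \<and> f y = 0"
proof -
  obtain x1 x2 where x: "x1 \<in> S" "x2 \<in> S" "x1 \<noteq> x2" "f x1 = f x2"
    using assms(3) unfolding inj_on_def by blast
  then show ?thesis
    using linear_on_diff[OF f S x(1,2)] vs1.subspace_diff[OF S x(1,2)] by (intro exI[of _ "x1 - x2"]) auto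
qed

text \<open>A pencil \<open>P + t Q\<close> of maps on a finite-dimensional \<open>S\<close> that is injective for one \<open>t\<^sub>0\<close>
  is injective for all but finitely many \<open>t\<close>: singular values give independent kernel vectors.\<close>
lemma pencil_finitely_many_singular:
  assumes S: "vs1.subspace S" and B0: "finite B0" "S \<subseteq> vs1.span B0"
    and P: "linear_on s1 s2 S P" and Q: "linear_on s1 s2 S Q"
    and inj0: "inj_on (\<lambda>y. P y + t0 *b Q y) S"
  shows "finite {t. \<not> inj_on (\<lambda>y. P y + t *b Q y) S}"
proof (rule ccontr)
  define R where "R t y = P y + t *b Q y" for t y
  have R: "linear_on s1 s2 S (R t)" for t
    using P Q by (simp add: linear_on_def R_def algebra_simps)
  define Bad where "Bad = {t. \<not> inj_on (R t) S}"
  assume "infinite {t. \<not> inj_on (\<lambda>y. P y + t *b Q y) S}"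
  then have infB: "infinite Bad" unfolding Bad_def R_def by simp
  have "\<exists>y. y \<in> S \<and> y \<noteq> 0 \<and> R t y = 0" if "t \<in> Bad" for t
    using linear_on_kernel[OF R S] that by (auto simp: Bad_def)
  then obtain y where y: "\<And>t. t \<in> Bad \<Longrightarrow> y t \<in> S \<and> y t \<noteq> 0 \<and> R t (y t) = 0" by metis
  have R0_nonzero: "R t0 v \<noteq> 0" if "v \<in> S" "v \<noteq> 0" for v
    using inj_onD[OF inj0[folded R_def] _ that(1) vs1.subspace_0[OF S]] linear_on_0[OF R S] that by auto
  have ne_t0: "t \<noteq> t0" if "t \<in> Bad" for t using y[OF that] R0_nonzero by auto
  define \<mu> where "\<mu> t = 1 / (t0 - t)" for t
  have Qy: "Q (y t) = \<mu> t *b R t0 (y t)" if t: "t \<in> Bad" for t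
  proof -
    have "R t0 (y t) = (t0 - t) *b Q (y t)"
      using y[OF t] by (simp add: R_def eq_neg_iff_add_eq_0 algebra_simps)
    then show ?thesis using ne_t0[OF t] by (simp add: \<mu>_def)
  qed
  have inj_mu: "inj_on \<mu> Bad" using ne_t0 by (auto simp: inj_on_def \<mu>_def)
  have inj_y: "inj_on y Bad"
  proof (rule inj_onI)
    fix t t' assume t: "t \<in> Bad" and t': "t' \<in> Bad" and e: "y t = y t'"
    then have "\<mu> t *b R t0 (y t) = \<mu> t' *b R t0 (y t)" using Qy[OF t] Qy[OF t'] by metis
    then show "t = t'" using R0_nonzero y[OF t] inj_onD[OF inj_mu _ t t'] by simp
  qed
  obtain Bf where Bf: "Bf \<subseteq> Bad" "finite Bf" "card Bf = Suc (card B0)"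
    using infinite_arbitrarily_large[OF infB] by blast
  have "vs1.independent (y ` Bf)"
  proof (rule pencil_eigenvectors_independent[OF R inj0[folded R_def] Q S, where \<mu> = "\<mu> \<circ> the_inv_into Bf y"])
    have injBf: "inj_on y Bf" using inj_y Bf(1) by (rule inj_on_subset)
    show "inj_on (\<mu> \<circ> the_inv_into Bf y) (y ` Bf)"
      using inj_on_subset[OF inj_mu Bf(1)] injBf
      by (auto simp: inj_on_def the_inv_into_f_f)
    show "Q v = (\<mu> \<circ> the_inv_into Bf y) v *b R t0 v" if "v \<in> y ` Bf" for v
      using that Qy Bf(1) injBf by (auto simp: the_inv_into_f_f)
  qed (use y Bf in auto)
  moreover have "y ` Bf \<subseteq> vs1.span B0" using y Bf(1) B0(2) by blast
  ultimately have "card (y ` Bf) \<le> card B0" using vs1.independent_span_bound[OF B0(1)] by blast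
  moreover have "card (y ` Bf) = card Bf" using card_image inj_on_subset[OF inj_y Bf(1)] by blast
  ultimately show False using Bf(3) by simp
qed

end


lemma subfield_UNIV: "is_subfield UNIV"
  by (simp add: is_subfield_def)

lemma subfield_neg: "is_subfield K \<Longrightarrow> x \<in> K \<Longrightarrow> - x \<in> K"
  by (simp add: is_subfield_def)

lemma subfield_div: "is_subfield K \<Longrightarrow> x \<in> K \<Longrightarrow> y \<in> K \<Longrightarrow> x / y \<in> K"
  unfolding is_subfield_def by (metis divide_inverse inverse_zero)

lemma subfield_sum: "is_subfield K \<Longrightarrow> (\<And>x. x \<in> S \<Longrightarrow> f x \<in> K) \<Longrightarrow> sum f S \<in> K"
  by (induction S rule: infinite_finite_induct) (auto simp: is_subfield_def)

text \<open>A subfield of a field of characteristic zero contains \<open>\<nat>\<close>, hence is infinite.\<close>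
lemma subfield_infinite:
  fixes K :: "'e::field_char_0 set"
  assumes K: "is_subfield K"
  shows "infinite K"
proof
  have "of_nat n \<in> K" for n
    using K by (induction n) (auto simp: is_subfield_def)
  then have "range (of_nat :: nat \<Rightarrow> 'e) \<subseteq> K" by auto
  moreover assume "finite K"
  ultimately have "finite (range (of_nat :: nat \<Rightarrow> 'e))" using finite_subset by blast
  moreover have "inj (of_nat :: nat \<Rightarrow> 'e)" by (simp add: inj_on_def)
  ultimately show False using finite_imageD by blast
qed

context vector_space
begin

lemma representation_combination:
  assumes B: "independent B" and T: "finite T" "T \<subseteq> B"
  shows "representation B (\<Sum>t\<in>T. c t *s t) b = (if b \<in> T then c b else 0)"
proof -
  have span: "t \<in> span B" if "t \<in> T" for t using that T(2) by (auto intro: span_base)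
  have "representation B (\<Sum>t\<in>T. c t *s t) b = (\<Sum>t\<in>T. c t * representation B t b)"
    using representation_sum[OF B, of T "\<lambda>t. c t *s t"] representation_scale[OF B span]
    by (simp add: span_scale span)
  also have "\<dots> = (\<Sum>t\<in>T. if t = b then c t else 0)"
    using representation_basis[OF B] T(2) by (intro sum.cong) auto
  finally show ?thesis using T(1) by simp
qed

end

definition K_functional :: "('a::field \<Rightarrow> 'b \<Rightarrow> 'b) \<Rightarrow> 'a set \<Rightarrow> 'b::ab_group_add set
    \<Rightarrow> ('b \<Rightarrow> 'a) \<Rightarrow> bool" where
  "K_functional sc K X \<phi> \<longleftrightarrow> (\<forall>x\<in>X. \<forall>y\<in>X. \<phi> (x + y) = \<phi> x + \<phi> y)
     \<and> (\<forall>c\<in>K. \<forall>x\<in>X. \<phi> (sc c x) = c * \<phi> x) \<and> (\<forall>x\<in>X. \<phi> x \<in> K)"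

context vector_space
begin

lemma E_span_eq: "E_span scale S = span S"
  unfolding E_span_def span_explicit by auto

lemma K_subspace_UNIV: "K_subspace UNIV scale S \<longleftrightarrow> subspace S"
  unfolding K_subspace_def subspace_def by auto

lemma K_indep_UNIV: "K_indep UNIV scale S \<longleftrightarrow> independent S"
  unfolding K_indep_def dependent_explicit by blast

lemma K_subspace_sum:
  assumes X: "K_subspace K scale X" and "\<And>i. i \<in> I \<Longrightarrow> a i \<in> K \<and> v i \<in> X"
  shows "(\<Sum>i\<in>I. a i *s v i) \<in> X"
  using assms(2) by (induction I rule: infinite_finite_induct) (use X in \<open>auto simp: K_subspace_def\<close>)

lemma K_subspace_diff:
  assumes X: "K_subspace K scale X" and K: "is_subfield K" and "x \<in> X" "y \<in> X"
  shows "x - y \<in> X"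
proof -
  have "- 1 \<in> K" using K unfolding is_subfield_def by blast
  then have "(- 1) *s y \<in> X" using X assms(4) unfolding K_subspace_def by blast
  then have "x + (- 1) *s y \<in> X" using X assms(3) unfolding K_subspace_def by blast
  then show ?thesis by simp
qed

lemma K_functional_sum:
  assumes \<phi>: "K_functional scale K X \<phi>" and X: "K_subspace K scale X"
    and I: "\<And>i. i \<in> I \<Longrightarrow> a i \<in> K \<and> v i \<in> X"
  shows "\<phi> (\<Sum>i\<in>I. a i *s v i) = (\<Sum>i\<in>I. a i * \<phi> (v i))"
  using I
proof (induction I rule: infinite_finite_induct)
  case (insert i I)
  have "(\<Sum>i\<in>I. a i *s v i) \<in> X" "a i *s v i \<in> X"
    using K_subspace_sum[OF X, of I] insert.prems X by (auto simp: K_subspace_def)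
  with insert \<phi> show ?case by (simp add: K_functional_def)
next
  have "\<phi> 0 = 0"
    using \<phi> X by (simp add: K_functional_def K_subspace_def) (metis add_cancel_right_right)
  { case infinite then show ?case using \<open>\<phi> 0 = 0\<close> by simp }
  { case empty then show ?case using \<open>\<phi> 0 = 0\<close> by simp }
qed

lemma K_functional_diff:
  assumes \<phi>: "K_functional scale K X \<phi>" and X: "K_subspace K scale X" and K: "is_subfield K"
    and "x \<in> X" "y \<in> X"
  shows "\<phi> (x - y) = \<phi> x - \<phi> y"
proof -
  have "x - y = (\<Sum>i\<in>{True, False}. (if i then 1 else - 1) *s (if i then x else y))"
    by simp
  also have "\<phi> \<dots> = (\<Sum>i\<in>{True, False}. (if i then 1 else - 1) * \<phi> (if i then x else y))"
    by (rule K_functional_sum[OF \<phi> X]) (use assms K in \<open>auto simp: is_subfield_def\<close>)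
  finally show ?thesis by simp
qed

lemma residual_functional_nonzero:
  assumes K: "is_subfield K" and T: "finite T" "u \<notin> T"
    and f: "\<And>t. t \<in> insert u T \<Longrightarrow> K_functional scale K X (f t)"
    and indep: "\<And>c. \<forall>t\<in>insert u T. c t \<in> K \<Longrightarrow> \<forall>x\<in>X. (\<Sum>t\<in>insert u T. c t * f t x) = 0
                  \<Longrightarrow> \<forall>t\<in>insert u T. c t = 0"
    and wX: "\<And>t. t \<in> T \<Longrightarrow> w t \<in> X"
  shows "\<exists>x0\<in>X. f u x0 - (\<Sum>t\<in>T. f u (w t) * f t x0) \<noteq> 0"
proof (rule ccontr)
  assume g0: "\<not> ?thesis"
  define c where "c t = (if t = u then 1 else - f u (w t))" for t
  have "\<forall>t\<in>insert u T. c t \<in> K"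
    using K f wX by (auto simp: c_def is_subfield_def K_functional_def)
  moreover have "(\<Sum>t\<in>insert u T. c t * f t x) = f u x - (\<Sum>t\<in>T. f u (w t) * f t x)" for x
  proof -
    have "(\<Sum>t\<in>T. c t * f t x) = - (\<Sum>t\<in>T. f u (w t) * f t x)"
      unfolding sum_negf[symmetric] using T(2) by (intro sum.cong) (auto simp: c_def)
    then show ?thesis using T by (simp add: c_def)
  qed
  ultimately have "c u = 0" using indep g0 by auto
  then show False by (simp add: c_def)
qed

text \<open>Given functionals \<open>f t\<close> (\<open>t \<in> T\<close>) with a dual system \<open>w\<close>, and one more functional
  \<open>f u\<close> independent of them, some vector is sent to \<open>1\<close> by \<open>f u\<close> and to \<open>0\<close> by all \<open>f t\<close>:
  correct a vector where the residual functional is nonzero, then normalise.\<close>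
lemma separating_vector:
  assumes K: "is_subfield K" and X: "K_subspace K scale X" and T: "finite T" "u \<notin> T"
    and f: "\<And>t. t \<in> insert u T \<Longrightarrow> K_functional scale K X (f t)"
    and indep: "\<And>c. \<forall>t\<in>insert u T. c t \<in> K \<Longrightarrow> \<forall>x\<in>X. (\<Sum>t\<in>insert u T. c t * f t x) = 0
                  \<Longrightarrow> \<forall>t\<in>insert u T. c t = 0"
    and wX: "\<And>t. t \<in> T \<Longrightarrow> w t \<in> X"
    and dual: "\<And>t t'. t \<in> T \<Longrightarrow> t' \<in> T \<Longrightarrow> f t' (w t) = (if t' = t then 1 else 0)"
  shows "\<exists>b\<in>X. f u b = 1 \<and> (\<forall>t\<in>T. f t b = 0)"
proof -
  have val: "f t x \<in> K" if "t \<in> insert u T" "x \<in> X" for t x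
    using f[OF that(1)] that(2) by (simp add: K_functional_def)
  define g where "g x = f u x - (\<Sum>t\<in>T. f u (w t) * f t x)" for x
  have "\<exists>x0\<in>X. g x0 \<noteq> 0"
    unfolding g_def by (rule residual_functional_nonzero[OF K T f indep wX])
  then obtain x0 where x0: "x0 \<in> X" "g x0 \<noteq> 0" by blast
  define b0 where "b0 = x0 - (\<Sum>t\<in>T. f t x0 *s w t)"
  have sumX: "(\<Sum>t\<in>T. f t x0 *s w t) \<in> X"
    by (rule K_subspace_sum[OF X]) (use val x0 wX in auto)
  have b0X: "b0 \<in> X" unfolding b0_def by (rule K_subspace_diff[OF X K x0(1) sumX])
  have fb0: "f s b0 = f s x0 - (\<Sum>t\<in>T. f t x0 * f s (w t))" if s: "s \<in> insert u T" for s
  proof -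
    have "f s b0 = f s x0 - f s (\<Sum>t\<in>T. f t x0 *s w t)"
      unfolding b0_def by (rule K_functional_diff[OF f[OF s] X K x0(1) sumX])
    also have "f s (\<Sum>t\<in>T. f t x0 *s w t) = (\<Sum>t\<in>T. f t x0 * f s (w t))"
      by (rule K_functional_sum[OF f[OF s] X]) (use val x0 wX in auto)
    finally show ?thesis .
  qed
  have fb0_u: "f u b0 = g x0" using fb0[of u] by (simp add: g_def mult.commute)
  have fb0_T: "f t b0 = 0" if t: "t \<in> T" for t
  proof -
    have "(\<Sum>t'\<in>T. f t' x0 * f t (w t')) = (\<Sum>t'\<in>T. if t' = t then f t' x0 else 0)"
      using dual t by (intro sum.cong) auto
    then show ?thesis using fb0[of t] t T(1) by simp
  qed
  have gK: "g x0 \<in> K" using val[OF _ b0X, of u] fb0_u by simp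
  then have inv: "1 / g x0 \<in> K" using subfield_div[OF K _ gK] K by (simp add: is_subfield_def)
  define b where "b = (1 / g x0) *s b0"
  have "b \<in> X" using X inv b0X by (simp add: b_def K_subspace_def)
  have fb: "f s b = (1 / g x0) * f s b0" if "s \<in> insert u T" for s
    using f[OF that] inv b0X by (simp add: b_def K_functional_def)
  show ?thesis
  proof (intro bexI[of _ b] conjI ballI)
    show "f u b = 1" using fb[of u] fb0_u x0(2) by simp
    show "f t b = 0" if "t \<in> T" for t using fb[of t] fb0_T[OF that] that by simp
  qed fact
qed

lemma independent_functionals_remove:
  assumes K: "is_subfield K" and u: "u \<notin> T"
    and indep: "\<And>c. \<forall>t\<in>insert u T. c t \<in> K \<Longrightarrow> \<forall>x\<in>X. (\<Sum>t\<in>insert u T. c t * f t x) = 0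
                  \<Longrightarrow> \<forall>t\<in>insert u T. c t = 0"
    and c: "\<forall>t\<in>T. c t \<in> K" "\<forall>x\<in>X. (\<Sum>t\<in>T. c t * f t x) = 0"
  shows "\<forall>t\<in>T. c t = 0"
proof -
  have "(\<Sum>t\<in>insert u T. (c(u := 0)) t * f t x) = (\<Sum>t\<in>T. c t * f t x)" for x
  proof (cases "finite T")
    case True
    then have "(\<Sum>t\<in>insert u T. (c(u := 0)) t * f t x) = (\<Sum>t\<in>T. (c(u := 0)) t * f t x)"
      using u by simp
    also have "\<dots> = (\<Sum>t\<in>T. c t * f t x)" using u by (intro sum.cong) auto
    finally show ?thesis .
  qed simp
  moreover have "\<forall>t\<in>insert u T. (c(u := 0)) t \<in> K"
    using c(1) K u by (simp add: is_subfield_def)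
  ultimately have "\<forall>t\<in>insert u T. (c(u := 0)) t = 0"
    using indep c(2) by presburger
  then show ?thesis using u by (metis fun_upd_other insertCI)
qed

text \<open>A dual system for \<open>T\<close> and a vector \<open>b\<close> separating \<open>f u\<close> from the \<open>f t\<close> give a dual
  system for \<open>insert u T\<close> (Gram--Schmidt-like correction of the old dual vectors).\<close>
lemma dual_system_insert:
  assumes K: "is_subfield K" and X: "K_subspace K scale X" and u: "u \<notin> T"
    and f: "\<And>t. t \<in> insert u T \<Longrightarrow> K_functional scale K X (f t)"
    and w: "\<forall>t\<in>T. w t \<in> X" "\<forall>t\<in>T. \<forall>t'\<in>T. f t' (w t) = (if t' = t then 1 else 0)"
    and b: "b \<in> X" "f u b = 1" "\<forall>t\<in>T. f t b = 0"
    and t: "t \<in> insert u T"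
  defines "w' \<equiv> \<lambda>s. if s = u then b else w s - f u (w s) *s b"
  shows "w' t \<in> X \<and> (\<forall>t'\<in>insert u T. f t' (w' t) = (if t' = t then 1 else 0))"
proof (cases "t = u")
  case False
  then have tT: "t \<in> T" using t by auto
  have fuK: "f u (w t) \<in> K" using f[of u] w(1) tT by (simp add: K_functional_def)
  then have sX: "f u (w t) *s b \<in> X" using X b(1) by (simp add: K_subspace_def)
  have w't: "w' t = w t - f u (w t) *s b" using False by (simp add: w'_def)
  have "f t' (w' t) = (if t' = t then 1 else 0)" if t': "t' \<in> insert u T" for t'
  proof -
    have "f t' (w' t) = f t' (w t) - f t' (f u (w t) *s b)"
      unfolding w't by (rule K_functional_diff[OF f[OF t'] X K _ sX]) (use w(1) tT in simp)
    also have "f t' (f u (w t) *s b) = f u (w t) * f t' b"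
      using f[OF t'] fuK b(1) by (simp add: K_functional_def)
    finally show ?thesis
      using t' tT False b(2,3) w(2) by (cases "t' = u") auto
  qed
  moreover have "w' t \<in> X" unfolding w't by (rule K_subspace_diff[OF X K _ sX]) (use w(1) tT in simp)
  ultimately show ?thesis by blast
next
  case True
  then show ?thesis using b u by (auto simp: w'_def)
qed

lemma dual_basis:
  assumes K: "is_subfield K" and X: "K_subspace K scale X" and T: "finite T"
    and f: "\<And>t. t \<in> T \<Longrightarrow> K_functional scale K X (f t)"
    and indep: "\<And>c. \<forall>t\<in>T. c t \<in> K \<Longrightarrow> \<forall>x\<in>X. (\<Sum>t\<in>T. c t * f t x) = 0 \<Longrightarrow> \<forall>t\<in>T. c t = 0"
  shows "\<exists>w. (\<forall>t\<in>T. w t \<in> X) \<and> (\<forall>t\<in>T. \<forall>t'\<in>T. f t' (w t) = (if t' = t then 1 else 0))"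
  using T f indep
proof (induction T rule: finite_induct)
  case (insert u T)
  obtain w where w: "\<forall>t\<in>T. w t \<in> X" "\<forall>t\<in>T. \<forall>t'\<in>T. f t' (w t) = (if t' = t then 1 else 0)"
    using insert.IH insert.prems(1) independent_functionals_remove[OF K insert.hyps(2) insert.prems(2)]
    by blast
  have "\<exists>b\<in>X. f u b = 1 \<and> (\<forall>t\<in>T. f t b = 0)"
    by (rule separating_vector[OF K X insert.hyps insert.prems]) (use w in auto)
  then obtain b where b: "b \<in> X" "f u b = 1" "\<forall>t\<in>T. f t b = 0" by blast
  define w' where "w' = (\<lambda>s. if s = u then b else w s - f u (w s) *s b)"
  have "w' t \<in> X \<and> (\<forall>t'\<in>insert u T. f t' (w' t) = (if t' = t then 1 else 0))"
    if "t \<in> insert u T" for t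
    using dual_system_insert[OF K X insert.hyps(2) insert.prems(1) w b that] unfolding w'_def by simp
  then show ?case by (intro exI[of _ w']) simp
qed simp

end


definition bilinear_form :: "('a::field \<Rightarrow> 'b \<Rightarrow> 'b) \<Rightarrow> ('b::ab_group_add \<Rightarrow> 'b \<Rightarrow> 'a) \<Rightarrow> bool" where
  "bilinear_form sc b \<longleftrightarrow>
     (\<forall>u u' w. b (u + u') w = b u w + b u' w) \<and> (\<forall>c u w. b (sc c u) w = c * b u w) \<and>
     (\<forall>u w w'. b u (w + w') = b u w + b u w') \<and> (\<forall>c u w. b u (sc c w) = c * b u w)"

lemma bilinear_form_swap: "bilinear_form sc b \<Longrightarrow> bilinear_form sc (\<lambda>x y. b y x)"
  by (simp add: bilinear_form_def)

context vector_space
begin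

lemma bilinear_form_functional:
  assumes "bilinear_form scale b"
  shows "K_functional scale UNIV UNIV (\<lambda>u. b u w)" "K_functional scale UNIV UNIV (\<lambda>w. b u w)"
  using assms by (simp_all add: bilinear_form_def K_functional_def)

lemma bilinear_form_sum_left:
  "bilinear_form scale b \<Longrightarrow> b (\<Sum>i\<in>I. a i *s v i) w = (\<Sum>i\<in>I. a i * b (v i) w)"
  using K_functional_sum[OF bilinear_form_functional(1)] by (simp add: K_subspace_def)

lemma bilinear_form_sum_right:
  "bilinear_form scale b \<Longrightarrow> b u (\<Sum>i\<in>I. a i *s v i) = (\<Sum>i\<in>I. a i * b u (v i))"
  using K_functional_sum[OF bilinear_form_functional(2)] by (simp add: K_subspace_def)

lemma complement_functionals_independent:
  assumes b: "bilinear_form scale b" and U: "subspace U"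
    and B: "finite B" "independent B" "B \<subseteq> U" "S0 \<subseteq> B"
    and S0: "{u\<in>U. \<forall>w\<in>W. b u w = 0} \<subseteq> span S0"
    and c: "\<forall>x\<in>W. (\<Sum>t\<in>B - S0. c t * b t x) = 0"
  shows "\<forall>t\<in>B - S0. c t = 0"
proof
  fix t assume t: "t \<in> B - S0"
  define u where "u = (\<Sum>t\<in>B - S0. c t *s t)"
  have "u \<in> U" unfolding u_def using B by (intro subspace_sum[OF U] subspace_scale[OF U]) auto
  moreover have "\<forall>w\<in>W. b u w = 0" using c by (simp add: u_def bilinear_form_sum_left[OF b])
  ultimately have "u \<in> span S0" using S0 by blast
  then obtain d where d: "u = (\<Sum>v\<in>S0. d v *s v)"
    using span_finite[OF finite_subset[OF B(4) B(1)]] by auto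
  define e where "e v = (if v \<in> S0 then - d v else c v)" for v
  have "(\<Sum>v\<in>B. e v *s v) = (\<Sum>v\<in>B - S0. e v *s v) + (\<Sum>v\<in>S0. e v *s v)"
    by (rule sum.subset_diff[OF B(4,1)])
  also have "(\<Sum>v\<in>B - S0. e v *s v) = u" unfolding u_def by (intro sum.cong) (auto simp: e_def)
  also have "(\<Sum>v\<in>S0. e v *s v) = - u" unfolding d
    by (auto simp: e_def sum_negf[symmetric] intro!: sum.cong)
  finally have "(\<Sum>v\<in>B. e v *s v) = 0" by simp
  then have "e t = 0" using independentD[OF B(2,1) subset_refl] t by blast
  then show "c t = 0" using t by (simp add: e_def)
qed

lemma dual_vectors_independent:
  assumes b: "bilinear_form scale b" and T: "finite T"
    and dual: "\<forall>t\<in>T. \<forall>t'\<in>T. b t' (w t) = (if t' = t then 1 else 0)"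
    and S1: "finite S1" "independent S1" "\<forall>s\<in>S1. \<forall>t\<in>T. b t s = 0"
  shows "independent (w ` T \<union> S1)" and "card (w ` T \<union> S1) = card T + card S1"
proof -
  have injw: "inj_on w T"
    by (rule inj_onI) (use dual in \<open>metis zero_neq_one\<close>)
  have disj: "w ` T \<inter> S1 = {}"
    using dual S1(3) by fastforce
  have split: "(\<Sum>x\<in>w ` T \<union> S1. g x) = (\<Sum>x\<in>w ` T. g x) + (\<Sum>x\<in>S1. g x)"
    for g :: "'b \<Rightarrow> 'b"
    by (rule sum.union_disjoint) (use T S1(1) disj in auto)
  show "independent (w ` T \<union> S1)"
  proof (rule independent_if_scalars_zero)
    show "finite (w ` T \<union> S1)" using T S1(1) by simp
    fix f x assume sz: "(\<Sum>x\<in>w ` T \<union> S1. f x *s x) = 0" and x: "x \<in> w ` T \<union> S1"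
    have fw: "f (w t) = 0" if t: "t \<in> T" for t
    proof -
      have "0 = b t (\<Sum>x\<in>w ` T \<union> S1. f x *s x)"
        using sz bilinear_form_sum_right[OF b, where I="{}"] by simp
      also have "\<dots> = (\<Sum>x\<in>w ` T. f x * b t x) + (\<Sum>x\<in>S1. f x * b t x)"
        unfolding bilinear_form_sum_right[OF b]
        by (rule sum.union_disjoint) (use T S1(1) disj in auto)
      also have "(\<Sum>x\<in>S1. f x * b t x) = 0" using S1(3) t by simp
      also have "(\<Sum>x\<in>w ` T. f x * b t x) = (\<Sum>t'\<in>T. f (w t') * b t (w t'))"
        by (rule sum.reindex[OF injw, unfolded comp_def])
      also have "\<dots> = (\<Sum>t'\<in>T. if t' = t then f (w t) else 0)"
        using dual t by (intro sum.cong) auto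
      finally show ?thesis using T t by simp
    qed
    then have "(\<Sum>x\<in>w ` T. f x *s x) = 0" by (auto intro!: sum.neutral)
    then have "(\<Sum>x\<in>S1. f x *s x) = 0" using sz split[of "\<lambda>x. f x *s x"] by simp
    then have "\<forall>x\<in>S1. f x = 0" using independentD[OF S1(2,1) subset_refl] by blast
    then show "f x = 0" using x fw by auto
  qed
  show "card (w ` T \<union> S1) = card T + card S1"
    using card_Un_disjoint[OF _ S1(1) disj] T card_image[OF injw] by simp
qed

lemma independent_card_le_dim_finite:
  assumes B0: "finite B0" "W \<subseteq> span B0" and I: "I \<subseteq> W" "independent I"
  shows "card I \<le> dim W"
proof -
  obtain Bw where Bw: "Bw \<subseteq> W" "independent Bw" "W \<subseteq> span Bw" "card Bw = dim W"
    by (rule basis_exists)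
  have "finite Bw" using independent_span_bound[OF B0(1) Bw(2)] Bw(1) B0(2) by auto
  moreover have "I \<subseteq> span Bw" using I(1) Bw(3) by blast
  ultimately have "card I \<le> card Bw" using independent_span_bound[OF _ I(2)] by blast
  with Bw(4) show ?thesis by simp
qed

lemma rank_inequality:
  assumes b: "bilinear_form scale b" and U: "subspace U" and W: "subspace W"
    and B0: "finite B0" "U \<subseteq> span B0" "W \<subseteq> span B0"
  shows "dim U + dim {w\<in>W. \<forall>u\<in>U. b u w = 0} \<le> dim W + dim {u\<in>U. \<forall>w\<in>W. b u w = 0}"
proof -
  define kU where "kU = {u\<in>U. \<forall>w\<in>W. b u w = 0}"
  define kW where "kW = {w\<in>W. \<forall>u\<in>U. b u w = 0}"
  have fin: "finite S" if "S \<subseteq> span B0" "independent S" for S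
    using independent_span_bound[OF B0(1)] that by blast
  obtain S0 where S0: "S0 \<subseteq> kU" "independent S0" "kU \<subseteq> span S0" "card S0 = dim kU"
    by (rule basis_exists)
  obtain B where B: "S0 \<subseteq> B" "B \<subseteq> U" "independent B" "U \<subseteq> span B"
    using maximal_independent_subset_extend[of S0 U] S0 by (auto simp: kU_def)
  have finB: "finite B" using fin B(2,3) B0(2) by blast
  define T where "T = B - S0"
  have cT: "card T + card S0 = dim U"
    using card_Diff_subset[OF finite_subset[OF B(1) finB] B(1)] card_mono[OF finB B(1)]
      basis_card_eq_dim[OF B(2,4,3)] by (simp add: T_def)
  have "\<exists>w. (\<forall>t\<in>T. w t \<in> W) \<and> (\<forall>t\<in>T. \<forall>t'\<in>T. b t' (w t) = (if t' = t then 1 else 0))"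
  proof (rule dual_basis[OF subfield_UNIV])
    show "K_subspace UNIV scale W" using W by (simp add: K_subspace_UNIV)
    show "finite T" using finB by (simp add: T_def)
    show "K_functional scale UNIV W (b t)" for t
      using bilinear_form_functional(2)[OF b] by (simp add: K_functional_def)
    show "\<forall>t\<in>T. c t = 0" if "\<forall>x\<in>W. (\<Sum>t\<in>T. c t * b t x) = 0" for c
      unfolding T_def
      by (rule complement_functionals_independent[OF b U finB B(3,2,1)])
         (use S0(3) that in \<open>auto simp: kU_def T_def\<close>)
  qed
  then obtain w where wW: "\<forall>t\<in>T. w t \<in> W"
    and dual: "\<forall>t\<in>T. \<forall>t'\<in>T. b t' (w t) = (if t' = t then 1 else 0)" by blast
  obtain S1 where S1: "S1 \<subseteq> kW" "independent S1" "kW \<subseteq> span S1" "card S1 = dim kW"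
    by (rule basis_exists)
  have finS1: "finite S1" using fin S1(1,2) B0(3) by (auto simp: kW_def)
  have TU: "T \<subseteq> U" using B(2) by (auto simp: T_def)
  have A: "independent (w ` T \<union> S1)" "card (w ` T \<union> S1) = card T + card S1"
    using dual_vectors_independent[OF b _ dual finS1 S1(2)] finB S1(1) TU
    by (auto simp: T_def kW_def)
  have "w ` T \<union> S1 \<subseteq> W" using wW S1(1) by (auto simp: kW_def)
  then have "card (w ` T \<union> S1) \<le> dim W"
    by (rule independent_card_le_dim_finite[OF B0(1,3) _ A(1)])
  then show ?thesis using A(2) cT S0(4) S1(4) unfolding kU_def kW_def by linarith
qed

lemma rank_identity:
  assumes b: "bilinear_form scale b" and U: "subspace U" and W: "subspace W"
    and B0: "finite B0" "U \<subseteq> span B0" "W \<subseteq> span B0"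
  shows "dim U + dim {w\<in>W. \<forall>u\<in>U. b u w = 0} = dim W + dim {u\<in>U. \<forall>w\<in>W. b u w = 0}"
  using rank_inequality[OF b U W B0] rank_inequality[OF bilinear_form_swap[OF b] W U B0(1,3,2)]
  by simp

end


lemma sum_fun_apply: "(sum f S) x = (\<Sum>i\<in>S. f i x)"
  by (induction S rule: infinite_finite_induct) auto

lemma ascale_apply [simp]: "ascale c a x = c * a x"
  by (simp add: ascale_def)

lemma vector_space_ascale: "vector_space (ascale :: 'e::field \<Rightarrow> ('g \<Rightarrow> 'e) \<Rightarrow> _)"
  by unfold_locales (auto simp: algebra_simps fun_eq_iff)

lemma vector_space_mult: "vector_space ((*) :: 'e::field \<Rightarrow> 'e \<Rightarrow> 'e)"
  by unfold_locales (simp_all add: algebra_simps)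

lemma vector_space_pointwise:
  assumes "vector_space sc"
  shows "vector_space (\<lambda>c (\<phi>::'x \<Rightarrow> 'y::ab_group_add) x. sc c (\<phi> x))"
proof -
  interpret vector_space sc by fact
  show ?thesis by unfold_locales (auto simp: fun_eq_iff scale_right_distrib scale_left_distrib)
qed

lemma grp_alg_zero: "0 \<in> grp_alg G UNIV"
  by (simp add: grp_alg_def)

lemma grp_alg_ascale: "a \<in> grp_alg G UNIV \<Longrightarrow> ascale c a \<in> grp_alg G UNIV"
  by (simp add: grp_alg_def)

lemma grp_alg_add: "a \<in> grp_alg G UNIV \<Longrightarrow> b \<in> grp_alg G UNIV \<Longrightarrow> a + b \<in> grp_alg G UNIV"
  by (simp add: grp_alg_def)

lemma grp_alg_sum: "(\<And>i. i \<in> S \<Longrightarrow> f i \<in> grp_alg G UNIV) \<Longrightarrow> sum f S \<in> grp_alg G UNIV"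
  by (simp add: grp_alg_def sum_fun_apply)

lemma grp_alg_mono: "a \<in> grp_alg G K \<Longrightarrow> a \<in> grp_alg G UNIV"
  by (simp add: grp_alg_def)

lemma grp_alg_subspace: "is_subfield K \<Longrightarrow> K_subspace K ascale (grp_alg G K)"
  unfolding K_subspace_def grp_alg_def is_subfield_def by auto

lemma conv_grp_alg: "conv G a b \<in> grp_alg G UNIV"
  by (simp add: conv_def grp_alg_def)

locale group_algebra =
  fixes G :: "('g, 'b) monoid_scheme" (structure)
  assumes grp: "group G" and fin: "finite (carrier G)"
begin

sublocale group G by (rule grp)

lemma grp_alg_delta: "g \<in> carrier G \<Longrightarrow> is_subfield K \<Longrightarrow> delta g \<in> grp_alg G K"
  by (auto simp: grp_alg_def delta_def is_subfield_def)

lemma delta_in_grp_alg: "g \<in> carrier G \<Longrightarrow> delta g \<in> grp_alg G UNIV"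
  by (auto simp: delta_def grp_alg_def)

lemma conv_grp_alg_K:
  assumes K: "is_subfield K" and a: "a \<in> grp_alg G K" and b: "b \<in> grp_alg G K"
  shows "conv G a b \<in> grp_alg G K"
proof -
  have "(\<Sum>g\<in>carrier G. a g * b (inv g \<otimes> x)) \<in> K" for x
    by (rule subfield_sum[OF K]) (use a b K in \<open>auto simp: grp_alg_def is_subfield_def\<close>)
  then show ?thesis using K by (simp add: grp_alg_def conv_def is_subfield_def)
qed

lemma conv_delta_left:
  assumes "g \<in> carrier G"
  shows "conv G (delta g) b = (\<lambda>x. if x \<in> carrier G then b (inv g \<otimes> x) else 0)"
  using assms fin
  by (simp add: conv_def delta_def if_distrib[of "\<lambda>t. t * _"] cong: if_cong)

lemma conv_delta_right:
  assumes g: "g \<in> carrier G" and a: "a \<in> grp_alg G UNIV"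
  shows "conv G a (delta g) = (\<lambda>x. if x \<in> carrier G then a (x \<otimes> inv g) else 0)"
proof
  fix x
  show "conv G a (delta g) x = (if x \<in> carrier G then a (x \<otimes> inv g) else 0)"
  proof (cases "x \<in> carrier G")
    case True
    have "h \<in> carrier G \<Longrightarrow> (inv h \<otimes> x = g) = (h = x \<otimes> inv g)" for h
      using True g by (simp add: inv_solve_left' inv_solve_right)
    then have "(\<Sum>h\<in>carrier G. a h * delta g (inv h \<otimes> x))
        = (\<Sum>h\<in>carrier G. if h = x \<otimes> inv g then a h else 0)"
      by (intro sum.cong) (auto simp: delta_def)
    also have "\<dots> = a (x \<otimes> inv g)" using fin True g by simp
    finally show ?thesis using True by (simp add: conv_def)
  qed (simp add: conv_def)
qed

lemma conv_delta_one_right: "a \<in> grp_alg G UNIV \<Longrightarrow> conv G a (delta \<one>) = a"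
  by (rule ext) (auto simp: conv_delta_right grp_alg_def)

lemma conv_delta_one_left: "b \<in> grp_alg G UNIV \<Longrightarrow> conv G (delta \<one>) b = b"
  by (rule ext) (auto simp: conv_delta_left grp_alg_def)

lemma conv_delta_delta:
  assumes g: "g \<in> carrier G" and h: "h \<in> carrier G"
  shows "conv G (delta g) (delta h) = delta (g \<otimes> h)"
proof
  fix x
  have "x \<in> carrier G \<Longrightarrow> (inv g \<otimes> x = h) = (x = g \<otimes> h)"
    using g h by (auto simp: m_assoc[symmetric])
  then show "conv G (delta g) (delta h) x = delta (g \<otimes> h) x"
    unfolding conv_delta_left[OF g] using g h by (auto simp: delta_def)
qed

lemma conv_delta_at_one: "y \<in> carrier G \<Longrightarrow> conv G (delta y) w \<one> = w (inv y)"
  by (simp add: conv_delta_left)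

lemma conv_add_left: "conv G (a + b) c = conv G a c + conv G b c"
  by (rule ext) (simp add: conv_def distrib_right sum.distrib)

lemma conv_add_right: "conv G a (b + c) = conv G a b + conv G a c"
  by (rule ext) (simp add: conv_def distrib_left sum.distrib)

lemma conv_ascale_left: "conv G (ascale t a) b = ascale t (conv G a b)"
  by (rule ext) (simp add: conv_def sum_distrib_left mult.assoc)

lemma conv_ascale_right: "conv G a (ascale t b) = ascale t (conv G a b)"
  by (rule ext) (simp add: conv_def sum_distrib_left mult.left_commute)

lemma conv_sum_left: "conv G (sum f S) c = (\<Sum>i\<in>S. conv G (f i) c)"
proof
  fix x show "conv G (sum f S) c x = (\<Sum>i\<in>S. conv G (f i) c) x"
    unfolding conv_def sum_fun_apply sum_distrib_right by (simp add: sum.swap[of _ S])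
qed

lemma conv_sum_right: "conv G c (sum f S) = (\<Sum>i\<in>S. conv G c (f i))"
proof
  fix x show "conv G c (sum f S) x = (\<Sum>i\<in>S. conv G c (f i)) x"
    unfolding conv_def sum_fun_apply sum_distrib_left by (simp add: sum.swap[of _ S])
qed

lemma scalar_in_grp_alg: "ascale c (delta \<one>) \<in> grp_alg G UNIV"
  by (rule grp_alg_ascale[OF delta_in_grp_alg[OF one_closed]])

lemma conv_scalar_left: "b \<in> grp_alg G UNIV \<Longrightarrow> conv G (ascale c (delta \<one>)) b = ascale c b"
  by (simp add: conv_ascale_left conv_delta_one_left)

lemma conv_scalar_right: "a \<in> grp_alg G UNIV \<Longrightarrow> conv G a (ascale c (delta \<one>)) = ascale c a"
  by (simp add: conv_ascale_right conv_delta_one_right)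

text \<open>Associativity of convolution (reindex the inner sum by \<open>k = h\<^sup>-\<^sup>1 g\<close>).\<close>
lemma conv_assoc:
  assumes a: "a \<in> grp_alg G UNIV" and b: "b \<in> grp_alg G UNIV"
  shows "conv G (conv G a b) c = conv G a (conv G b c)"
proof
  fix x
  show "conv G (conv G a b) c x = conv G a (conv G b c) x"
  proof (cases "x \<in> carrier G")
    case x: True
    have cancel_inv: "p \<otimes> q \<otimes> inv q = p" if "p \<in> carrier G" "q \<in> carrier G" for p q
      using that by (simp add: m_assoc)
    have "conv G (conv G a b) c x
        = (\<Sum>g\<in>carrier G. (\<Sum>h\<in>carrier G. a h * b (inv h \<otimes> g)) * c (inv g \<otimes> x))"
      using x by (simp add: conv_def)
    also have "\<dots> = (\<Sum>h\<in>carrier G. \<Sum>g\<in>carrier G. a h * (b (inv h \<otimes> g) * c (inv g \<otimes> x)))"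
      unfolding sum_distrib_right mult.assoc by (rule sum.swap)
    also have "\<dots> = (\<Sum>h\<in>carrier G. \<Sum>k\<in>carrier G. a h * (b k * c (inv k \<otimes> (inv h \<otimes> x))))"
    proof (rule sum.cong[OF refl])
      fix h assume h: "h \<in> carrier G"
      show "(\<Sum>g\<in>carrier G. a h * (b (inv h \<otimes> g) * c (inv g \<otimes> x))) =
            (\<Sum>k\<in>carrier G. a h * (b k * c (inv k \<otimes> (inv h \<otimes> x))))"
        by (rule sum.reindex_bij_witness[where i="\<lambda>k. h \<otimes> k" and j="\<lambda>g. inv h \<otimes> g"])
           (use h x in \<open>auto simp: m_assoc[symmetric] inv_mult_group cancel_inv\<close>)
    qed
    also have "\<dots> = conv G a (conv G b c) x"
      using x by (simp add: conv_def sum_distrib_left)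
    finally show ?thesis .
  qed (simp add: conv_def)
qed

lemma grp_alg_expand:
  assumes a: "a \<in> grp_alg G UNIV"
  shows "a = (\<Sum>g\<in>carrier G. ascale (a g) (delta g))"
proof
  fix x
  show "a x = (\<Sum>g\<in>carrier G. ascale (a g) (delta g)) x"
    using fin a by (simp add: sum_fun_apply delta_def if_distrib[of "\<lambda>t. _ * t"]
        grp_alg_def cong: if_cong)
qed

lemma grp_alg_span:
  "(grp_alg G UNIV :: ('g \<Rightarrow> 'e::field) set) \<subseteq> module.span ascale (delta ` carrier G)"
proof
  interpret vector_space "ascale :: 'e \<Rightarrow> ('g \<Rightarrow> 'e) \<Rightarrow> _" by (rule vector_space_ascale)
  fix a :: "'g \<Rightarrow> 'e" assume a: "a \<in> grp_alg G UNIV"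
  have "(\<Sum>g\<in>carrier G. ascale (a g) (delta g)) \<in> span (delta ` carrier G)"
    by (intro span_sum span_scale span_base) auto
  then show "a \<in> span (delta ` carrier G)" by (simp only: grp_alg_expand[OF a, symmetric])
qed

text \<open>The trace pairing \<open>\<langle>a, b\<rangle> = (a * b)(1)\<close>; it is bilinear, associative and
  nondegenerate, since \<open>\<langle>\<delta>\<^bsub>x\<^sup>-\<^sup>1\<^esub>, w\<rangle> = w(x)\<close>.\<close>
definition pairing :: "('g \<Rightarrow> 'e::field) \<Rightarrow> ('g \<Rightarrow> 'e) \<Rightarrow> 'e" where
  "pairing a b = conv G a b \<one>"

lemma pairing_add_left: "pairing (u + u') w = pairing u w + pairing u' w"
  and pairing_add_right: "pairing u (w + w') = pairing u w + pairing u w'"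
  and pairing_scale_left: "pairing (ascale c u) w = c * pairing u w"
  and pairing_scale_right: "pairing u (ascale c w) = c * pairing u w"
  by (simp_all add: pairing_def conv_add_left conv_add_right conv_ascale_left conv_ascale_right)

lemma pairing_zero_left: "pairing 0 w = 0"
  and pairing_zero_right: "pairing u 0 = 0"
  by (simp_all add: pairing_def conv_def)

lemma pairing_diff_left: "pairing (u - u') w = pairing u w - pairing u' w"
  by (simp add: pairing_def conv_def sum_subtractf left_diff_distrib)

lemma pairing_sum_left: "pairing (\<Sum>i\<in>I. f i) w = (\<Sum>i\<in>I. pairing (f i) w)"
  by (simp add: pairing_def conv_sum_left sum_fun_apply)

lemma pairing_bilinear: "bilinear_form ascale pairing"
  by (simp add: bilinear_form_def pairing_add_left pairing_add_right pairing_scale_left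
      pairing_scale_right)

lemma pairing_assoc:
  "a \<in> grp_alg G UNIV \<Longrightarrow> b \<in> grp_alg G UNIV \<Longrightarrow> pairing (conv G a b) c = pairing a (conv G b c)"
  by (simp add: pairing_def conv_assoc)

lemma pairing_delta: "x \<in> carrier G \<Longrightarrow> pairing (delta (inv x)) w = w x"
  by (simp add: pairing_def conv_delta_at_one)

lemma pairing_K:
  "is_subfield K \<Longrightarrow> a \<in> grp_alg G K \<Longrightarrow> b \<in> grp_alg G K \<Longrightarrow> pairing a b \<in> K"
  using conv_grp_alg_K[of K a b] by (simp add: pairing_def grp_alg_def)

lemma pairing_nondegenerate:
  assumes "\<And>x. x \<in> carrier G \<Longrightarrow> pairing (delta (inv x)) w = 0" and "w \<in> grp_alg G UNIV"
  shows "w = 0"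
proof
  fix x show "w x = 0 x" using assms by (cases "x \<in> carrier G") (auto simp: pairing_delta grp_alg_def)
qed

lemma ideal_iso_dim:
  fixes M N :: "('g \<Rightarrow> 'e::field) set"
  assumes M: "left_ideal G UNIV M" and N: "left_ideal G UNIV N" and iso: "ideal_iso G M N"
  shows "vector_space.dim ascale M = vector_space.dim ascale N"
proof -
  interpret LL: vector_space_pair "ascale :: 'e \<Rightarrow> ('g \<Rightarrow> 'e) \<Rightarrow> _" ascale
    by (intro vector_space_pair.intro vector_space_ascale)
  obtain f where f: "bij_betw f M N" "\<forall>x\<in>M. \<forall>y\<in>M. f (x + y) = f x + f y"
    "\<forall>a\<in>grp_alg G UNIV. \<forall>x\<in>M. f (conv G a x) = conv G a (f x)"
    using iso unfolding ideal_iso_def by blast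
  have MN: "M \<subseteq> grp_alg G UNIV" "N \<subseteq> grp_alg G UNIV" using M N by (simp_all add: left_ideal_def)
  have "f (ascale c x) = ascale c (f x)" if x: "x \<in> M" for c x
  proof -
    have xL: "x \<in> grp_alg G UNIV" and fxL: "f x \<in> grp_alg G UNIV"
      using x f(1) MN by (auto simp: bij_betw_def)
    have "f (ascale c x) = f (conv G (ascale c (delta \<one>)) x)" by (simp add: conv_scalar_left xL)
    also have "\<dots> = conv G (ascale c (delta \<one>)) (f x)" using f(3) scalar_in_grp_alg x by blast
    also have "\<dots> = ascale c (f x)" by (simp add: conv_scalar_left fxL)
    finally show ?thesis .
  qed
  then have "linear_on ascale ascale M f" using f(2) by (simp add: linear_on_def)
  moreover have "LL.vs1.subspace M"
    using M by (simp add: left_ideal_def LL.vs1.K_subspace_UNIV)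
  ultimately show ?thesis
    using LL.linear_on_inj_dim[of M f] f(1) by (simp add: bij_betw_def)
qed

definition annihilator :: "'e::field set \<Rightarrow> ('g \<Rightarrow> 'e) set \<Rightarrow> ('g \<Rightarrow> 'e) set" where
  "annihilator K S = {v \<in> grp_alg G K. \<forall>a\<in>S. pairing v a = 0}"

lemma annihilator_subspace: "module.subspace ascale (annihilator UNIV S)"
  by (auto simp: module.subspace_def[OF vector_space_ascale[unfolded module_iff_vector_space[symmetric]]]
      annihilator_def grp_alg_def pairing_add_left pairing_scale_left pairing_zero_left)

lemma annihilator_span:
  fixes S0 :: "('g \<Rightarrow> 'e::field) set"
  assumes "S \<subseteq> module.span ascale S0"
  shows "annihilator K S0 \<subseteq> annihilator K S"
proof
  interpret L: vector_space "ascale :: 'e \<Rightarrow> ('g \<Rightarrow> 'e) \<Rightarrow> _" by (rule vector_space_ascale)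
  fix v assume v: "v \<in> annihilator K S0"
  have "L.subspace {w. pairing v w = 0}"
    by (simp add: L.subspace_def pairing_add_right pairing_scale_right pairing_zero_right)
  then have "L.span S0 \<subseteq> {w. pairing v w = 0}"
    using v by (intro L.span_minimal) (auto simp: annihilator_def)
  then show "v \<in> annihilator K S" using v assms by (auto simp: annihilator_def)
qed

lemma rational_dual_system:
  fixes S :: "('g \<Rightarrow> 'e::field) set"
  assumes K: "is_subfield K" and S: "S \<subseteq> grp_alg G K"
  obtains A0 w where "finite A0" "A0 \<subseteq> S" "S \<subseteq> module.span ascale A0"
    "\<And>a. a \<in> A0 \<Longrightarrow> w a \<in> grp_alg G K"
    "\<And>a a'. a \<in> A0 \<Longrightarrow> a' \<in> A0 \<Longrightarrow> pairing (w a) a' = (if a' = a then 1 else 0)"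
proof -
  interpret L: vector_space "ascale :: 'e \<Rightarrow> ('g \<Rightarrow> 'e) \<Rightarrow> _" by (rule vector_space_ascale)
  obtain A0 where A0: "A0 \<subseteq> S" "L.independent A0" "S \<subseteq> L.span A0"
    by (rule L.maximal_independent_subset)
  have "A0 \<subseteq> L.span (delta ` carrier G)" using A0(1) S grp_alg_span grp_alg_mono by blast
  then have finA0: "finite A0" using L.independent_span_bound[OF _ A0(2)] fin by blast
  have "\<exists>w. (\<forall>a\<in>A0. w a \<in> grp_alg G K) \<and>
      (\<forall>a\<in>A0. \<forall>a'\<in>A0. pairing (w a) a' = (if a' = a then 1 else 0))"
  proof (rule L.dual_basis[OF K grp_alg_subspace[OF K] finA0])
    show "K_functional ascale K (grp_alg G K) (\<lambda>x. pairing x a)" if "a \<in> A0" for a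
      using pairing_K[OF K] that A0(1) S
      by (auto simp: K_functional_def pairing_add_left pairing_scale_left)
    text \<open>Independence of the functionals: test against the group elements.\<close>
    show "\<forall>a\<in>A0. c a = 0" if c: "\<forall>a\<in>A0. c a \<in> K" "\<forall>x\<in>grp_alg G K. (\<Sum>a\<in>A0. c a * pairing x a) = 0"
      for c
    proof -
      have "(\<Sum>a\<in>A0. ascale (c a) a) = 0"
      proof
        fix x
        show "(\<Sum>a\<in>A0. ascale (c a) a) x = 0 x"
        proof (cases "x \<in> carrier G")
          case True
          have "(\<Sum>a\<in>A0. c a * pairing (delta (inv x)) a) = 0"
            using c(2) grp_alg_delta[OF inv_closed[OF True] K] by blast
          then show ?thesis using True by (simp add: sum_fun_apply pairing_delta)
        next
          case False
          then show ?thesis using A0(1) S by (auto simp: sum_fun_apply grp_alg_def intro!: sum.neutral)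
        qed
      qed
      then show ?thesis using L.independentD[OF A0(2) finA0 subset_refl, of c] by blast
    qed
  qed
  then obtain w where "\<forall>a\<in>A0. w a \<in> grp_alg G K"
    "\<forall>a\<in>A0. \<forall>a'\<in>A0. pairing (w a) a' = (if a' = a then 1 else 0)" by blast
  then show ?thesis by (intro that[OF finA0 A0(1,3), of w]) simp_all
qed

lemma dual_projection_rational:
  fixes A0 :: "('g \<Rightarrow> 'e::field) set"
  assumes K: "is_subfield K" and A0: "finite A0" "A0 \<subseteq> grp_alg G K"
    and w: "\<And>a. a \<in> A0 \<Longrightarrow> w a \<in> grp_alg G K"
    and dual: "\<And>a a'. a \<in> A0 \<Longrightarrow> a' \<in> A0 \<Longrightarrow> pairing (w a) a' = (if a' = a then 1 else 0)"
    and x: "x \<in> grp_alg G K"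
  shows "x - (\<Sum>a\<in>A0. ascale (pairing x a) (w a)) \<in> annihilator K A0"
proof -
  interpret L: vector_space "ascale :: 'e \<Rightarrow> ('g \<Rightarrow> 'e) \<Rightarrow> _" by (rule vector_space_ascale)
  have "(\<Sum>a\<in>A0. ascale (pairing x a) (w a)) \<in> grp_alg G K"
    using A0(2) w x pairing_K[OF K] by (intro L.K_subspace_sum[OF grp_alg_subspace[OF K]]) auto
  then have "x - (\<Sum>a\<in>A0. ascale (pairing x a) (w a)) \<in> grp_alg G K"
    by (rule L.K_subspace_diff[OF grp_alg_subspace[OF K] K x])
  moreover have "pairing (x - (\<Sum>a\<in>A0. ascale (pairing x a) (w a))) a' = 0" if a': "a' \<in> A0" for a'
  proof -
    have "(\<Sum>a\<in>A0. pairing x a * pairing (w a) a') = (\<Sum>a\<in>A0. if a = a' then pairing x a else 0)"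
      using dual a' by (intro sum.cong) auto
    also have "\<dots> = pairing x a'" using a' A0(1) by simp
    finally show ?thesis by (simp only: pairing_diff_left pairing_sum_left pairing_scale_left) simp
  qed
  ultimately show ?thesis by (simp add: annihilator_def)
qed

text \<open>The annihilator of \<open>K\<close>-rational elements is spanned by its \<open>K\<close>-rational part:
  project onto it along a rational dual system.\<close>
lemma annihilator_rational:
  fixes S :: "('g \<Rightarrow> 'e::field) set"
  assumes K: "is_subfield K" and S: "S \<subseteq> grp_alg G K"
  shows "annihilator UNIV S = module.span ascale (annihilator K S)"
proof -
  interpret L: vector_space "ascale :: 'e \<Rightarrow> ('g \<Rightarrow> 'e) \<Rightarrow> _" by (rule vector_space_ascale)
  obtain A0 w where A0: "finite A0" "A0 \<subseteq> S" "S \<subseteq> L.span A0"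
    and w: "\<And>a. a \<in> A0 \<Longrightarrow> w a \<in> grp_alg G K"
    and dual: "\<And>a a'. a \<in> A0 \<Longrightarrow> a' \<in> A0 \<Longrightarrow> pairing (w a) a' = (if a' = a then 1 else 0)"
    using rational_dual_system[OF K S] by blast
  define P where "P x = x - (\<Sum>a\<in>A0. ascale (pairing x a) (w a))" for x
  have "linear_on ascale ascale UNIV P"
    by (auto simp: linear_on_def P_def pairing_add_left pairing_scale_left fun_eq_iff sum_fun_apply
        sum.distrib sum_distrib_left algebra_simps)
  then have P_linear:
    "P (\<Sum>g\<in>carrier G. ascale (v g) (delta g)) = (\<Sum>g\<in>carrier G. ascale (v g) (P (delta g)))" for v
    using vector_space_pair.linear_on_sum[of ascale ascale UNIV P "carrier G" delta v]
    by (simp add: vector_space_pair.intro vector_space_ascale)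
  have P_fix: "P v = v" if "v \<in> annihilator UNIV S" for v
  proof -
    have "pairing v a = 0" if "a \<in> A0" for a using \<open>v \<in> annihilator UNIV S\<close> that A0(2)
      by (auto simp: annihilator_def)
    then show ?thesis by (simp add: P_def)
  qed
  have P_delta: "P (delta g) \<in> annihilator K S" if g: "g \<in> carrier G" for g
    using dual_projection_rational[OF K A0(1) _ w dual grp_alg_delta[OF g K]] A0(2) S
      annihilator_span[OF A0(3)] unfolding P_def by blast
  show ?thesis
  proof
    show "annihilator UNIV S \<subseteq> L.span (annihilator K S)"
    proof
      fix v assume v: "v \<in> annihilator UNIV S"
      have "v \<in> grp_alg G UNIV" using v by (simp add: annihilator_def)
      then have "v = P (\<Sum>g\<in>carrier G. ascale (v g) (delta g))"
        using P_fix[OF v] grp_alg_expand by metis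
      also have "\<dots> \<in> L.span (annihilator K S)"
        unfolding P_linear using P_delta by (intro L.span_sum L.span_scale L.span_base)
      finally show "v \<in> L.span (annihilator K S)" .
    qed
    show "L.span (annihilator K S) \<subseteq> annihilator UNIV S"
      by (intro L.span_minimal annihilator_subspace) (auto simp: annihilator_def grp_alg_def)
  qed
qed

end


locale group_module = group_algebra G for G :: "('g, 'b) monoid_scheme" (structure) +
  fixes sc :: "'e::field \<Rightarrow> 'y::ab_group_add \<Rightarrow> 'y"
    and lm :: "('g \<Rightarrow> 'e) \<Rightarrow> 'y \<Rightarrow> 'y"
    and Y :: "'y set"
  assumes vs: "vector_space sc" and modY: "left_module G UNIV sc lm Y"
begin

sublocale vsY: vector_space sc by (rule vs)
sublocale vsL: vector_space "ascale :: 'e \<Rightarrow> ('g \<Rightarrow> 'e) \<Rightarrow> _" by (rule vector_space_ascale)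
sublocale YL: vector_space_pair sc "ascale :: 'e \<Rightarrow> ('g \<Rightarrow> 'e) \<Rightarrow> _" ..

lemma Y_subspace: "vsY.subspace Y"
  using modY by (simp add: left_module_def vsY.K_subspace_UNIV)

lemma lm_in: "a \<in> grp_alg G UNIV \<Longrightarrow> y \<in> Y \<Longrightarrow> lm a y \<in> Y"
  using modY by (simp add: left_module_def)

lemma lm_add_right: "a \<in> grp_alg G UNIV \<Longrightarrow> y \<in> Y \<Longrightarrow> z \<in> Y \<Longrightarrow> lm a (y + z) = lm a y + lm a z"
  using modY by (simp add: left_module_def)

lemma lm_add_left:
  "a \<in> grp_alg G UNIV \<Longrightarrow> b \<in> grp_alg G UNIV \<Longrightarrow> y \<in> Y \<Longrightarrow> lm (a + b) y = lm a y + lm b y"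
  using modY by (simp add: left_module_def)

lemma lm_conv:
  "a \<in> grp_alg G UNIV \<Longrightarrow> b \<in> grp_alg G UNIV \<Longrightarrow> y \<in> Y \<Longrightarrow> lm (conv G a b) y = lm a (lm b y)"
  using modY by (simp add: left_module_def)

lemma lm_scalar: "y \<in> Y \<Longrightarrow> lm (ascale c (delta \<one>)) y = sc c y"
  using modY by (simp add: left_module_def)

lemma lm_one: "y \<in> Y \<Longrightarrow> lm (delta \<one>) y = y"
  using lm_scalar[of y 1] by (simp add: ascale_def)

text \<open>Since scalars act through \<open>E\<cdot>\<delta>\<^sub>1\<close>, the action is \<open>E\<close>-bilinear.\<close>
lemma lm_ascale:
  assumes a: "a \<in> grp_alg G UNIV" and y: "y \<in> Y"
  shows "lm (ascale c a) y = sc c (lm a y)"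
proof -
  have "lm (ascale c a) y = lm (conv G (ascale c (delta \<one>)) a) y" by (simp add: conv_scalar_left a)
  also have "\<dots> = sc c (lm a y)" by (simp add: lm_conv scalar_in_grp_alg a y lm_scalar lm_in)
  finally show ?thesis .
qed

lemma lm_sc:
  assumes a: "a \<in> grp_alg G UNIV" and y: "y \<in> Y"
  shows "lm a (sc c y) = sc c (lm a y)"
proof -
  have "lm a (sc c y) = lm (conv G a (ascale c (delta \<one>))) y"
    by (simp add: lm_conv scalar_in_grp_alg a y lm_scalar)
  also have "\<dots> = sc c (lm a y)" by (simp add: conv_scalar_right a lm_ascale y)
  finally show ?thesis .
qed

lemma lm_zero_right: "a \<in> grp_alg G UNIV \<Longrightarrow> lm a 0 = 0"
  using lm_add_right[of a 0 0] vsY.subspace_0[OF Y_subspace] by simp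

lemma lm_zero_left: "y \<in> Y \<Longrightarrow> lm 0 y = 0"
  using lm_add_left[OF grp_alg_zero grp_alg_zero] by simp

lemma lm_sum_left:
  "(\<And>i. i \<in> S \<Longrightarrow> f i \<in> grp_alg G UNIV) \<Longrightarrow> y \<in> Y \<Longrightarrow> lm (sum f S) y = (\<Sum>i\<in>S. lm (f i) y)"
proof (induction S rule: infinite_finite_induct)
  case (insert x S)
  have "sum f S \<in> grp_alg G UNIV" using insert.prems by (simp add: grp_alg_sum)
  then have "lm (f x + sum f S) y = lm (f x) y + lm (sum f S) y"
    using insert.prems by (intro lm_add_left) auto
  moreover have "lm (sum f S) y = (\<Sum>i\<in>S. lm (f i) y)" using insert.IH insert.prems by auto
  ultimately show ?case by (simp only: sum.insert[OF insert.hyps])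
qed (auto simp: lm_zero_left)

definition annihilated :: "('g \<Rightarrow> 'e) set \<Rightarrow> 'y set \<Rightarrow> 'y set" where
  "annihilated M Z = {z\<in>Z. \<forall>m\<in>M. lm m z = 0}"

lemma annihilated_subspace:
  assumes M: "M \<subseteq> grp_alg G UNIV" and Z: "vsY.subspace Z" "Z \<subseteq> Y"
  shows "vsY.subspace (annihilated M Z)"
  unfolding vsY.subspace_def annihilated_def
  using M Z vsY.subspace_0[OF Z(1)] vsY.subspace_add[OF Z(1)] vsY.subspace_scale[OF Z(1)]
  by (auto simp: lm_zero_right lm_add_right lm_sc subset_iff)

lemma HomG_eq:
  assumes "\<phi> \<in> HomG G M lm Y Z"
  shows "\<phi> x = (if x \<in> grp_alg G UNIV then lm x (\<phi> (delta \<one>)) else 0)"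
proof (cases "x \<in> grp_alg G UNIV")
  case True
  then have "\<phi> x = \<phi> (conv G x (delta \<one>))" by (simp add: conv_delta_one_right)
  also have "\<dots> = lm x (\<phi> (delta \<one>))"
    using assms True delta_in_grp_alg[OF one_closed] unfolding HomG_def by blast
  finally show ?thesis using True by simp
qed (use assms in \<open>simp add: HomG_def\<close>)

lemma HomG_of_annihilated:
  assumes M: "M \<subseteq> grp_alg G UNIV" and Z: "Z \<subseteq> Y" and z: "z \<in> annihilated M Z"
  shows "(\<lambda>x. if x \<in> grp_alg G UNIV then lm x z else 0) \<in> HomG G M lm Y Z"
  using z M Z delta_in_grp_alg[OF one_closed]
  by (auto simp: HomG_def annihilated_def lm_in lm_add_left lm_conv lm_one conv_grp_alg subset_iff
      grp_alg_add)

lemma HomG_subspace: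
  assumes Z: "vsY.subspace Z"
  shows "module.subspace (\<lambda>c \<phi> x. sc c (\<phi> x)) (HomG G M lm Y Z)"
  unfolding module.subspace_def[OF vector_space_pointwise[OF vs, unfolded module_iff_vector_space[symmetric]]]
  using vsY.subspace_0[OF Y_subspace] vsY.subspace_0[OF Z] vsY.subspace_add[OF Y_subspace]
    vsY.subspace_add[OF Z] vsY.subspace_scale[OF Y_subspace] vsY.subspace_scale[OF Z]
  by (auto simp: HomG_def lm_zero_right lm_add_right lm_sc vsY.scale_right_distrib)

text \<open>\<open>Hom\<^sub>G(\<Lambda>/M, Y; Z) \<cong> {z \<in> Z. M z = 0}\<close> via \<open>\<phi> \<mapsto> \<phi>([1])\<close>.\<close>
lemma HomG_dim:
  assumes M: "M \<subseteq> grp_alg G UNIV" and Z: "vsY.subspace Z" "Z \<subseteq> Y"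
  shows "Hdim sc (HomG G M lm Y Z) = vsY.dim (annihilated M Z)"
proof -
  let ?H = "HomG G M lm Y Z" and ?ev = "\<lambda>\<phi>::('g \<Rightarrow> 'e) \<Rightarrow> 'y. \<phi> (delta \<one>)"
  interpret HY: vector_space_pair "\<lambda>c (\<phi>::('g \<Rightarrow> 'e) \<Rightarrow> 'y) x. sc c (\<phi> x)" sc
    by (intro vector_space_pair.intro vector_space_pointwise vs)
  have "inj_on ?ev ?H"
  proof (rule inj_onI)
    fix \<phi> \<psi> assume \<phi>: "\<phi> \<in> ?H" and \<psi>: "\<psi> \<in> ?H" and eq: "?ev \<phi> = ?ev \<psi>"
    show "\<phi> = \<psi>"
    proof
      fix x show "\<phi> x = \<psi> x" using HomG_eq[OF \<phi>, of x] HomG_eq[OF \<psi>, of x] eq by simp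
    qed
  qed
  moreover have "?ev ` ?H = annihilated M Z"
  proof
    show "?ev ` ?H \<subseteq> annihilated M Z"
    proof clarify
      fix \<phi> assume \<phi>: "\<phi> \<in> ?H"
      have "lm m (?ev \<phi>) = 0" if "m \<in> M" for m
        using HomG_eq[OF \<phi>, of m] \<phi> that M by (auto simp: HomG_def)
      then show "?ev \<phi> \<in> annihilated M Z" using \<phi> by (simp add: HomG_def annihilated_def)
    qed
    show "annihilated M Z \<subseteq> ?ev ` ?H"
    proof
      fix z assume z: "z \<in> annihilated M Z"
      then have "z \<in> Y" using Z(2) by (auto simp: annihilated_def)
      then have "z = ?ev (\<lambda>x. if x \<in> grp_alg G UNIV then lm x z else 0)"
        by (simp add: lm_one delta_in_grp_alg)
      then show "z \<in> ?ev ` ?H" using HomG_of_annihilated[OF M Z(2) z] by (rule image_eqI)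
    qed
  qed
  ultimately show ?thesis
    using HY.linear_on_inj_dim[OF _ HomG_subspace[OF Z(1), of M], where f = ?ev]
    by (simp add: linear_on_def)
qed


definition equivariant_embedding :: "('y \<Rightarrow> 'g \<Rightarrow> 'e) \<Rightarrow> bool" where
  "equivariant_embedding h \<longleftrightarrow> inj_on h Y \<and> (\<forall>y\<in>Y. h y \<in> grp_alg G UNIV)
     \<and> linear_on sc ascale Y h \<and> (\<forall>a\<in>grp_alg G UNIV. \<forall>y\<in>Y. h (lm a y) = conv G a (h y))"

text \<open>Additivity and equivariance already force \<open>E\<close>-linearity, since scalars act through \<open>E\<cdot>1\<close>.\<close>
lemma equivariant_embeddingI:
  assumes "inj_on h Y" "\<forall>y\<in>Y. h y \<in> grp_alg G UNIV" "\<forall>y\<in>Y. \<forall>z\<in>Y. h (y + z) = h y + h z"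
    and equiv: "\<forall>a\<in>grp_alg G UNIV. \<forall>y\<in>Y. h (lm a y) = conv G a (h y)"
  shows "equivariant_embedding h"
proof -
  have "h (sc c y) = ascale c (h y)" if "y \<in> Y" for c y
    using equiv scalar_in_grp_alg that lm_scalar[OF that] conv_scalar_left assms(2) by metis
  then show ?thesis using assms by (simp add: equivariant_embedding_def linear_on_def)
qed

lemma embedding_independent_finite:
  assumes h: "equivariant_embedding h" and B: "B \<subseteq> Y" "vsY.independent B"
  shows "finite B"
proof -
  have "vsL.independent (h ` B)"
    using h B by (intro YL.linear_on_inj_independent[OF _ Y_subspace])
      (auto simp: equivariant_embedding_def)
  moreover have "h ` B \<subseteq> vsL.span (delta ` carrier G)"
    using h B grp_alg_span by (auto simp: equivariant_embedding_def)
  ultimately have "finite (h ` B)" using vsL.independent_span_bound[OF finite_imageI[OF fin]] by blast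
  then show ?thesis
    using h B by (auto simp: equivariant_embedding_def finite_image_iff inj_on_subset)
qed

definition lift :: "('y \<Rightarrow> 'e) \<Rightarrow> 'y \<Rightarrow> 'g \<Rightarrow> 'e" where
  "lift \<psi> y = (\<lambda>x. if x \<in> carrier G then \<psi> (lm (delta (inv x)) y) else 0)"

lemma lift_in_grp_alg: "lift \<psi> y \<in> grp_alg G UNIV"
  by (simp add: lift_def grp_alg_def)

lemma lm_delta_in: "x \<in> carrier G \<Longrightarrow> y \<in> Y \<Longrightarrow> lm (delta x) y \<in> Y"
  by (rule lm_in[OF delta_in_grp_alg])

lemma lift_linear:
  assumes \<psi>: "linear_on sc (*) Y \<psi>"
  shows "linear_on sc ascale Y (lift \<psi>)"
  using \<psi> by (auto simp: linear_on_def lift_def fun_eq_iff lm_add_right lm_sc lm_delta_in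
      delta_in_grp_alg)

lemma lift_equivariant:
  assumes \<psi>: "linear_on sc (*) Y \<psi>" and a: "a \<in> grp_alg G UNIV" and y: "y \<in> Y"
  shows "lift \<psi> (lm a y) = conv G a (lift \<psi> y)"
proof
  interpret YE: vector_space_pair sc "(*) :: 'e \<Rightarrow> 'e \<Rightarrow> 'e"
    by (intro vector_space_pair.intro vs vector_space_mult)
  fix x
  show "lift \<psi> (lm a y) x = conv G a (lift \<psi> y) x"
  proof (cases "x \<in> carrier G")
    case x: True
    have ix: "inv x \<in> carrier G" using x by simp
    have "conv G (delta (inv x)) a = conv G (delta (inv x)) (\<Sum>g\<in>carrier G. ascale (a g) (delta g))"
      using grp_alg_expand[OF a] by simp
    also have "\<dots> = (\<Sum>g\<in>carrier G. ascale (a g) (delta (inv x \<otimes> g)))"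
      by (simp add: conv_sum_right conv_ascale_right conv_delta_delta ix)
    finally have "lm (delta (inv x)) (lm a y) = (\<Sum>g\<in>carrier G. sc (a g) (lm (delta (inv x \<otimes> g)) y))"
      using lm_conv[OF delta_in_grp_alg[OF ix] a y] y
      by (simp add: lm_sum_left lm_ascale delta_in_grp_alg grp_alg_ascale ix)
    then have "lift \<psi> (lm a y) x = (\<Sum>g\<in>carrier G. a g * \<psi> (lm (delta (inv x \<otimes> g)) y))"
      using x YE.linear_on_sum[OF \<psi> Y_subspace, of "carrier G" "\<lambda>g. lm (delta (inv x \<otimes> g)) y" a]
      by (simp add: lift_def lm_delta_in y ix)
    also have "\<dots> = (\<Sum>g\<in>carrier G. a g * lift \<psi> y (inv g \<otimes> x))"
      using x by (intro sum.cong) (simp_all add: lift_def inv_mult_group)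
    also have "\<dots> = conv G a (lift \<psi> y) x" using x by (simp add: conv_def)
    finally show ?thesis .
  qed (simp add: lift_def conv_def)
qed

lemma lift_value_at_one:
  assumes h: "equivariant_embedding h" and y: "y \<in> Y"
  shows "lift (\<lambda>y. h y \<one>) y = h y"
proof
  fix x
  show "lift (\<lambda>y. h y \<one>) y x = h y x"
  proof (cases "x \<in> carrier G")
    case True
    then have "(delta (inv x) :: 'g \<Rightarrow> 'e) \<in> grp_alg G UNIV" by (simp add: delta_in_grp_alg)
    then have "h (lm (delta (inv x)) y) = conv G (delta (inv x)) (h y)"
      using h y unfolding equivariant_embedding_def by blast
    then show ?thesis using True by (simp add: lift_def conv_delta_at_one)
  qed (use h y in \<open>simp add: lift_def equivariant_embedding_def grp_alg_def\<close>)
qed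

end


locale rational_module = group_module G sc lm Y
  for G :: "('g, 'b) monoid_scheme" (structure) and sc :: "'e::field \<Rightarrow> 'y::ab_group_add \<Rightarrow> 'y"
    and lm Y +
  fixes F :: "'e set" and YF :: "'y set" and h :: "'y \<Rightarrow> 'g \<Rightarrow> 'e"
  assumes subfield: "is_subfield F" and infinite_F: "infinite F"
    and modYF: "left_module G F sc lm YF" and ratY: "rational_form F sc YF Y"
    and h: "equivariant_embedding h"
begin

lemma YF_subset: "YF \<subseteq> Y"
  using ratY by (simp add: rational_form_def)

definition basis :: "'y set" where
  "basis = (SOME B. B \<subseteq> YF \<and> vsY.independent B \<and> YF \<subseteq> vsY.span B)"

lemma basis:
  "basis \<subseteq> YF" "vsY.independent basis" "vsY.span basis = Y" "finite basis" "basis \<subseteq> Y"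
proof -
  obtain B where "B \<subseteq> YF" "vsY.independent B" "YF \<subseteq> vsY.span B"
    by (rule vsY.maximal_independent_subset)
  then have "basis \<subseteq> YF \<and> vsY.independent basis \<and> YF \<subseteq> vsY.span basis"
    unfolding basis_def by (intro someI[where P = "\<lambda>B. B \<subseteq> YF \<and> vsY.independent B \<and> YF \<subseteq> vsY.span B"]) blast
  then have B: "basis \<subseteq> YF" "vsY.independent basis" "YF \<subseteq> vsY.span basis" by blast+
  have YF: "YF \<subseteq> Y" "vsY.span YF = Y" using ratY by (simp_all add: rational_form_def vsY.E_span_eq)
  show "basis \<subseteq> YF" "vsY.independent basis" using B(1,2) by blast+
  show "vsY.span basis = Y"
    using B(1,3) YF vsY.span_mono vsY.span_span by (metis subset_antisym)
  show "finite basis"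
    using embedding_independent_finite[OF h _ B(2)] B(1) YF(1) by blast
  show "basis \<subseteq> Y" using B(1) YF(1) by blast
qed

text \<open>A rational vector is an \<open>F\<close>-combination of the basis, since \<open>F\<close>-independence of rational
  vectors implies \<open>E\<close>-independence.\<close>
lemma rational_combination:
  assumes y: "y \<in> YF"
  shows "\<exists>T c. finite T \<and> T \<subseteq> basis \<and> (\<forall>t\<in>T. c t \<in> F) \<and> y = (\<Sum>t\<in>T. sc (c t) t)"
proof (cases "y \<in> basis")
  case True
  have "(1::'e) \<in> F" using subfield by (simp add: is_subfield_def)
  then show ?thesis using True by (intro exI[of _ "{y}"] exI[of _ "\<lambda>_. 1::'e"]) simp
next
  case False
  have "y \<in> vsY.span basis" using y YF_subset basis(3) by blast
  then have "\<not> K_indep UNIV sc (insert y basis)"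
    using False by (simp add: vsY.K_indep_UNIV vsY.independent_insert)
  moreover have "insert y basis \<subseteq> YF" using y basis(1) by blast
  ultimately have "\<not> K_indep F sc (insert y basis)"
    using ratY unfolding rational_form_def by blast
  then obtain T c where T: "finite T" "T \<subseteq> insert y basis" "\<forall>t\<in>T. c t \<in> F"
      "(\<Sum>t\<in>T. sc (c t) t) = 0" "\<exists>t\<in>T. c t \<noteq> 0"
    unfolding K_indep_def by blast
  define T' where "T' = T - {y}"
  have T': "finite T'" "T' \<subseteq> basis" using T(1,2) by (auto simp: T'_def)
  text \<open>The relation must involve \<open>y\<close>, since the basis vectors are independent.\<close>
  have "y \<in> T \<and> c y \<noteq> 0"
  proof (rule ccontr)
    assume no: "\<not> (y \<in> T \<and> c y \<noteq> 0)"
    have "(\<Sum>t\<in>T. sc (c t) t) = (\<Sum>t\<in>T'. sc (c t) t)"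
    proof (cases "y \<in> T")
      case True
      then show ?thesis using no sum.remove[OF T(1) True, of "\<lambda>t. sc (c t) t"] by (simp add: T'_def)
    qed (simp add: T'_def)
    then have "c t = 0" if "t \<in> T'" for t
      using vsY.independentD[OF basis(2) T'] T(4) that by simp
    then show False using T(5) no by (auto simp: T'_def)
  qed
  then have yT: "y \<in> T" "c y \<noteq> 0" by blast+
  have "sc (c y) y + (\<Sum>t\<in>T'. sc (c t) t) = 0"
    using T(4) sum.remove[OF T(1) yT(1), of "\<lambda>t. sc (c t) t"] by (simp add: T'_def)
  then have eqy: "sc (c y) y = - (\<Sum>t\<in>T'. sc (c t) t)" by (simp add: eq_neg_iff_add_eq_0)
  have "y = sc (inverse (c y)) (sc (c y) y)" using yT by simp
  also have "\<dots> = sc (inverse (c y)) (- (\<Sum>t\<in>T'. sc (c t) t))" by (simp only: eqy)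
  also have "\<dots> = (\<Sum>t\<in>T'. sc (- c t / c y) t)"
    by (simp add: vsY.scale_sum_right sum_negf[symmetric] divide_inverse mult.commute)
  finally have yeq: "y = (\<Sum>t\<in>T'. sc (- c t / c y) t)" .
  have coeffs: "- c t / c y \<in> F" if "t \<in> T'" for t
  proof -
    have "c t \<in> F" "c y \<in> F" using T(3) yT(1) that by (auto simp: T'_def)
    then have "- c t \<in> F" using subfield_neg[OF subfield] by blast
    then show ?thesis using subfield_div[OF subfield _ \<open>c y \<in> F\<close>] by blast
  qed
  show ?thesis
  proof (intro exI conjI ballI)
    show "finite T'" "T' \<subseteq> basis" by (fact T')+
  qed (use coeffs yeq in auto)
qed

lemma rational_coordinates:
  assumes "y \<in> YF" shows "vsY.representation basis y b \<in> F"
proof -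
  obtain T c where "finite T" "T \<subseteq> basis" "\<forall>t\<in>T. c t \<in> F" "y = (\<Sum>t\<in>T. sc (c t) t)"
    using rational_combination[OF assms] by blast
  then show ?thesis using vsY.representation_combination[OF basis(2)] subfield
    by (simp add: is_subfield_def)
qed

definition coord :: "('y \<Rightarrow> 'e) \<Rightarrow> 'y \<Rightarrow> 'e" where
  "coord c y = (\<Sum>b\<in>basis. c b * vsY.representation basis y b)"

lemma coord_linear: "linear_on sc (*) Y (coord c)"
  using vsY.representation_add[OF basis(2)] vsY.representation_scale[OF basis(2)] basis(3)
  by (auto simp: linear_on_def coord_def distrib_left sum.distrib sum_distrib_left mult.left_commute)

lemma coord_basis: "b \<in> basis \<Longrightarrow> coord c b = c b"
  using basis(4) by (simp add: coord_def vsY.representation_basis[OF basis(2)] if_distrib cong: if_cong)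

lemma coord_update:
  assumes "b0 \<in> basis"
  shows "coord (c(b0 := t)) y = coord (c(b0 := 0)) y + t * coord (\<lambda>b. if b = b0 then 1 else 0) y"
  using assms basis(4)
  by (simp add: coord_def sum.remove[of basis b0] if_distrib[of "\<lambda>x. x * _"] algebra_simps
      cong: if_cong)

text \<open>With rational coefficients, the lift maps \<open>Y\<^sub>F\<close> into \<open>F[G]\<close>, because \<open>Y\<^sub>F\<close> is \<open>F[G]\<close>-stable.\<close>
lemma lift_coord_rational:
  assumes c: "\<forall>b\<in>basis. c b \<in> F" and y: "y \<in> YF"
  shows "lift (coord c) y \<in> grp_alg G F"
proof -
  have "lm (delta (inv x)) y \<in> YF" if "x \<in> carrier G" for x
    using modYF y grp_alg_delta[OF inv_closed[OF that] subfield] by (simp add: left_module_def)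
  then have "coord c (lm (delta (inv x)) y) \<in> F" if "x \<in> carrier G" for x
    unfolding coord_def using c rational_coordinates subfield that
    by (intro subfield_sum[OF subfield]) (auto simp: is_subfield_def)
  then show ?thesis using subfield by (simp add: grp_alg_def lift_def is_subfield_def)
qed

lemma embedding_is_lift:
  assumes y: "y \<in> Y"
  shows "lift (coord (\<lambda>b. h b \<one>)) y = h y"
proof -
  interpret YE: vector_space_pair sc "(*) :: 'e \<Rightarrow> 'e \<Rightarrow> 'e"
    by (intro vector_space_pair.intro vs vector_space_mult)
  have "linear_on sc (*) Y (\<lambda>y. h y \<one>)"
    using h by (simp add: equivariant_embedding_def linear_on_def)
  then have "coord (\<lambda>b. h b \<one>) z = h z \<one>" if "z \<in> Y" for z
    using YE.linear_on_eq_on_span[OF coord_linear _ Y_subspace, where B = basis] that basis coord_basis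
    by auto
  then have "lift (coord (\<lambda>b. h b \<one>)) y = lift (\<lambda>y. h y \<one>) y"
    using y lm_delta_in[OF inv_closed] by (auto simp: lift_def)
  then show ?thesis using lift_value_at_one[OF h y] by simp
qed

text \<open>Coordinate by coordinate, the coefficients can be made rational while keeping the lift
  injective: each coordinate enters through a pencil with only finitely many bad values.\<close>
lemma rational_choice:
  assumes "finite S" "S \<subseteq> basis"
  shows "\<exists>c. (\<forall>b\<in>S. c b \<in> F) \<and> inj_on (lift (coord c)) Y"
  using assms
proof (induction S rule: finite_induct)
  case empty
  have "inj_on (lift (coord (\<lambda>b. h b \<one>))) Y"
    using h embedding_is_lift by (simp add: equivariant_embedding_def cong: inj_on_cong)
  then show ?case by blast
next
  case (insert b0 S)
  then obtain c where cF: "\<forall>b\<in>S. c b \<in> F" and injc: "inj_on (lift (coord c)) Y" by auto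
  have b0: "b0 \<in> basis" using insert.prems by blast
  define P where "P = lift (coord (c(b0 := 0)))"
  define Q where "Q = lift (coord (\<lambda>b. if b = b0 then 1 else 0))"
  have pencil: "lift (coord (c(b0 := t))) = (\<lambda>y. P y + ascale t (Q y))" for t
    unfolding P_def Q_def lift_def coord_update[OF b0, of c t] by (simp add: fun_eq_iff distrib_left)
  have "finite {t. \<not> inj_on (\<lambda>y. P y + ascale t (Q y)) Y}"
  proof (rule YL.pencil_finitely_many_singular[OF Y_subspace basis(4)])
    show "Y \<subseteq> vsY.span basis" using basis(3) by simp
    show "linear_on sc ascale Y P" "linear_on sc ascale Y Q"
      unfolding P_def Q_def by (intro lift_linear coord_linear)+
    show "inj_on (\<lambda>y. P y + ascale (c b0) (Q y)) Y"
      using injc pencil[of "c b0"] by simp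
  qed
  then have "infinite (F - {t. \<not> inj_on (\<lambda>y. P y + ascale t (Q y)) Y})"
    using infinite_F by (rule Diff_infinite_finite)
  then obtain t where t: "t \<in> F" "inj_on (\<lambda>y. P y + ascale t (Q y)) Y"
    using infinite_imp_nonempty by blast
  then have "inj_on (lift (coord (c(b0 := t)))) Y" by (simp add: pencil)
  moreover have "\<forall>b\<in>insert b0 S. (c(b0 := t)) b \<in> F" using cF t(1) by auto
  ultimately show ?case by blast
qed

theorem rational_embedding:
  "\<exists>h'. equivariant_embedding h' \<and> (\<forall>y\<in>YF. h' y \<in> grp_alg G F)"
proof -
  obtain c where c: "\<forall>b\<in>basis. c b \<in> F" "inj_on (lift (coord c)) Y"
    using rational_choice[OF basis(4) subset_refl] by blast
  have "equivariant_embedding (lift (coord c))"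
    unfolding equivariant_embedding_def
    using c(2) lift_in_grp_alg lift_linear[OF coord_linear] lift_equivariant[OF coord_linear] by simp
  then show ?thesis using lift_coord_rational[OF c(1)] by (intro exI[of _ "lift (coord c)"]) simp
qed

end


context group_module
begin

lemma embedding_zero: "equivariant_embedding h \<Longrightarrow> h 0 = 0"
  using YL.linear_on_0[OF _ Y_subspace, of h] unfolding equivariant_embedding_def by blast

lemma embedded_annihilated:
  assumes h: "equivariant_embedding h" and M: "left_ideal G UNIV M" and Z: "Z \<subseteq> Y"
  shows "h ` annihilated M Z = {w \<in> h ` Z. \<forall>m\<in>M. pairing m w = 0}"
proof -
  have M_alg: "M \<subseteq> grp_alg G UNIV" and Mcl: "\<And>a m. a \<in> grp_alg G UNIV \<Longrightarrow> m \<in> M \<Longrightarrow> conv G a m \<in> M"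
    using M by (simp_all add: left_ideal_def)
  have hequiv: "h (lm m z) = conv G m (h z)" if "m \<in> M" "z \<in> Z" for m z
    using h that M_alg Z unfolding equivariant_embedding_def by blast
  show ?thesis
  proof (intro equalityI subsetI)
    fix w assume "w \<in> h ` annihilated M Z"
    then obtain z where z: "z \<in> Z" "\<forall>m\<in>M. lm m z = 0" "w = h z" by (auto simp: annihilated_def)
    have "pairing m w = 0" if "m \<in> M" for m
      using hequiv[OF that z(1)] z(2,3) that embedding_zero[OF h] by (simp add: pairing_def)
    then show "w \<in> {w \<in> h ` Z. \<forall>m\<in>M. pairing m w = 0}" using z by auto
  next
    fix w assume "w \<in> {w \<in> h ` Z. \<forall>m\<in>M. pairing m w = 0}"
    then obtain z where z: "z \<in> Z" "w = h z" and orth: "\<forall>m\<in>M. pairing m w = 0" by auto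
    have "lm m z = 0" if m: "m \<in> M" for m
    proof -
      text \<open>\<open>M\<close> is a left ideal, so \<open>m w\<close> pairs to zero with every group element.\<close>
      have "conv G m w = 0"
      proof (rule pairing_nondegenerate)
        show "pairing (delta (inv x)) (conv G m w) = 0" if "x \<in> carrier G" for x
          using orth Mcl[OF delta_in_grp_alg m] pairing_assoc[OF delta_in_grp_alg, of _ m w]
            M_alg m that by (auto simp: subset_iff)
      qed (rule conv_grp_alg)
      then have "h (lm m z) = h 0" using hequiv[OF m z(1)] z(2) embedding_zero[OF h] by simp
      then show ?thesis
        using h lm_in M_alg m z(1) Z vsY.subspace_0[OF Y_subspace]
        unfolding equivariant_embedding_def by (meson inj_onD subsetD)
    qed
    then show "w \<in> h ` annihilated M Z" using z by (auto simp: annihilated_def)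
  qed
qed

lemma hom_dimension_formula:
  assumes h: "equivariant_embedding h" and M: "left_ideal G UNIV M"
    and Z: "vsY.subspace Z" "Z \<subseteq> Y"
  shows "Hdim sc (HomG G M lm Y Z) + Edim M = Edim (h ` Z) + Edim (M \<inter> annihilator UNIV (h ` Z))"
proof -
  have M_alg: "M \<subseteq> grp_alg G UNIV" and Msub: "vsL.subspace M"
    using M by (simp_all add: left_ideal_def vsL.K_subspace_UNIV)
  have hlin: "linear_on sc ascale Y h" and hinj: "inj_on h Y"
    using h by (simp_all add: equivariant_embedding_def)
  have annY: "annihilated M Z \<subseteq> Y" using Z(2) by (auto simp: annihilated_def)
  have "Hdim sc (HomG G M lm Y Z) = vsY.dim (annihilated M Z)" by (rule HomG_dim[OF M_alg Z])
  also have "\<dots> = Edim (h ` annihilated M Z)"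
    using YL.linear_on_inj_dim[OF linear_on_subset[OF hlin annY] annihilated_subspace[OF M_alg Z]]
      inj_on_subset[OF hinj annY] by simp
  also have "\<dots> = Edim {w \<in> h ` Z. \<forall>m\<in>M. pairing m w = 0}"
    by (simp add: embedded_annihilated[OF h M Z(2)])
  finally have hom: "Hdim sc (HomG G M lm Y Z) = Edim {w \<in> h ` Z. \<forall>m\<in>M. pairing m w = 0}" .
  have hZ: "vsL.subspace (h ` Z)" "h ` Z \<subseteq> vsL.span (delta ` carrier G)"
    using YL.linear_on_subspace_image[OF hlin Y_subspace Z] h Z(2) grp_alg_span
    by (auto simp: equivariant_embedding_def)
  have "Edim M + Edim {w \<in> h ` Z. \<forall>m\<in>M. pairing m w = 0}
      = Edim (h ` Z) + Edim {m \<in> M. \<forall>w\<in>h ` Z. pairing m w = 0}"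
    using vsL.rank_identity[OF pairing_bilinear Msub hZ(1) finite_imageI[OF fin]] M_alg grp_alg_span hZ(2)
    by blast
  moreover have "{m \<in> M. \<forall>w\<in>h ` Z. pairing m w = 0} = M \<inter> annihilator UNIV (h ` Z)"
    using M_alg by (auto simp: annihilator_def)
  ultimately show ?thesis using hom by simp
qed

lemma annihilator_right_rational:
  assumes h: "equivariant_embedding h" and hF: "\<forall>z\<in>ZF. h z \<in> grp_alg G F"
    and F: "is_subfield F" and D: "D \<subseteq> carrier G"
    and ZF: "D_submodule D F sc lm ZF" "ZF \<subseteq> Y" and Z: "Z = vsY.span ZF"
  shows "right_rational_sub G D F (annihilator UNIV (h ` Z))"
proof -
  have hlin: "linear_on sc ascale Y h" using h by (simp add: equivariant_embedding_def)
  have "ZF \<subseteq> Z" using Z vsY.span_superset by blast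
  then have ZF_span: "h ` ZF \<subseteq> vsL.span (h ` Z)" using vsL.span_superset by blast
  have "h z \<in> vsL.span (h ` ZF)" if "z \<in> Z" for z
    using YL.linear_on_span_image[OF hlin Y_subspace ZF(2), of z] that Z by simp
  then have Z_span: "h ` Z \<subseteq> vsL.span (h ` ZF)" by blast
  have eq: "annihilator UNIV (h ` Z) = annihilator UNIV (h ` ZF)"
    by (intro equalityI annihilator_span ZF_span Z_span)
  define VF where "VF = annihilator F (h ` ZF)"
  have "annihilator UNIV (h ` Z) = vsL.span VF"
    unfolding eq VF_def using hF by (intro annihilator_rational[OF F]) auto
  moreover have "VF \<subseteq> grp_alg G F" "K_subspace F ascale VF"
    using F by (auto simp: VF_def annihilator_def K_subspace_def grp_alg_def is_subfield_def
        pairing_add_left pairing_scale_left pairing_zero_left)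
  moreover have "conv G v b \<in> VF" if v: "v \<in> VF" and b: "b \<in> sub_alg D F" for v b
  proof -
    have vF: "v \<in> grp_alg G F" using v by (simp add: VF_def annihilator_def)
    have bF: "b \<in> grp_alg G F" using b D F by (auto simp: sub_alg_def grp_alg_def)
    have "pairing (conv G v b) (h z) = 0" if z: "z \<in> ZF" for z
    proof -
      have "lm b z \<in> ZF" using ZF(1) b z by (simp add: D_submodule_def)
      moreover have "h (lm b z) = conv G b (h z)"
        using h grp_alg_mono[OF bF] z ZF(2) unfolding equivariant_embedding_def by blast
      ultimately show ?thesis
        using pairing_assoc[OF grp_alg_mono[OF vF] grp_alg_mono[OF bF]] v
        by (auto simp: VF_def annihilator_def)
    qed
    then show ?thesis using conv_grp_alg_K[OF F vF bF] by (simp add: VF_def annihilator_def)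
  qed
  ultimately show ?thesis
    unfolding right_rational_sub_def vsL.E_span_eq by blast
qed

end

theorem lemmaA12:
  fixes G :: "('g, 'b) monoid_scheme"
    and D :: "'g set"
    and F :: "'e::field_char_0 set"
    and M N :: "('g \<Rightarrow> 'e) set"
    and sc :: "'e \<Rightarrow> 'y::ab_group_add \<Rightarrow> 'y"
    and lm :: "('g \<Rightarrow> 'e) \<Rightarrow> 'y \<Rightarrow> 'y"
    and Y Z YF ZF :: "'y set"
  assumes "group G" and "finite (carrier G)" and "subgroup D G"
    and "is_subfield F" and "splitting_field G F"
    and "left_ideal G UNIV M" and "right_generic G D F M"
    and "vector_space sc"
    and "left_module G UNIV sc lm Y"
    and "D_submodule D UNIV sc lm Z" and "Z \<subseteq> Y"
    and "left_module G F sc lm YF" and "rational_form F sc YF Y"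
    and "D_submodule D F sc lm ZF" and "ZF \<subseteq> YF" and "rational_form F sc ZF Z"
    and "\<exists>h. inj_on h Y \<and> (\<forall>y\<in>Y. h y \<in> grp_alg G UNIV)
           \<and> (\<forall>y\<in>Y. \<forall>z\<in>Y. h (y + z) = h y + h z)
           \<and> (\<forall>a\<in>grp_alg G UNIV. \<forall>y\<in>Y. h (lm a y) = conv G a (h y))"
    and "left_ideal G UNIV N" and "ideal_iso G M N"
  shows "Hdim sc (HomG G M lm Y Z) \<le> Hdim sc (HomG G N lm Y Z)"
proof -
  have "group_module G sc lm Y"
    using assms(1,2,8,9) by (simp add: group_module_def group_algebra_def group_module_axioms_def)
  then interpret group_module G sc lm Y .
  obtain h where "equivariant_embedding h"
    using assms(17) equivariant_embeddingI by blast
  then have "rational_module G sc lm Y F YF h"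
    using assms(4,12,13) subfield_infinite[OF assms(4)] group_module_axioms
    by (simp add: rational_module_def rational_module_axioms_def)
  then interpret rational_module G sc lm Y F YF h .
  text \<open>Replace the embedding by one that is rational on \<open>Y\<^sub>F\<close>, hence on \<open>Z\<^sub>F\<close>.\<close>
  obtain h' where h': "equivariant_embedding h'" "\<forall>y\<in>YF. h' y \<in> grp_alg G F"
    using rational_embedding by blast
  have Z: "vsY.subspace Z" "Z = vsY.span ZF"
    using assms(10,16) by (simp_all add: D_submodule_def vsY.K_subspace_UNIV rational_form_def
        vsY.E_span_eq)
  define V where "V = annihilator UNIV (h' ` Z)"
  have "right_rational_sub G D F V"
    unfolding V_def using h' assms(4,14,15) subgroup.subset[OF assms(3)] YF_subset Z(2)
    by (intro annihilator_right_rational) auto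
  then have "Edim (M \<inter> V) \<le> Edim (N \<inter> V)"
    using assms(7,18,19) by (simp add: right_generic_def)
  moreover have "Edim M = Edim N" by (rule ideal_iso_dim[OF assms(6,18,19)])
  moreover have formula: "Hdim sc (HomG G K lm Y Z) + Edim K = Edim (h' ` Z) + Edim (K \<inter> V)"
    if "left_ideal G UNIV K" for K
    unfolding V_def by (rule hom_dimension_formula[OF h'(1) that Z(1) assms(11)])
  ultimately show ?thesis using formula[OF assms(6)] formula[OF assms(18)] by linarith
qed

end
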